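(* Let $F$ be a bivariate subdistribution function and $F^T(x,y):=F(y,x)$. Then $F$ is strict if and only if both $T_F$ and $T_{F^T}$ are Markov operators.
   Context: $\mathbb{R}_+=[0,\infty)$. A function $F:\mathbb{R}_+^2\to\mathbb{R}_+$ is a bivariate subdistribution function if it is nonnegative, $2$-increasing, bounded above by $\min\{x,y\}$, and Lipschitz with constant $1$. $F$ is strict if $\lim_{t\to\infty}F(w_1,t)=w_1$ and $\lim_{t\to\infty}F(t,w_2)=w_2$ for all $(w_1,w_2)\in\mathbb{R}_+^2$. For such $F$, $T_F$ is the operator on $L^1(\mathbb{R}_+)+L^\infty(\mathbb{R}_+)$ given by $T_Ff(x):=\partial_x\int_0^\infty\partial_2F(x,t)f(t)\,dt$; it is doubly substochastic (positive, linear, maps $L^1$ to $L^1$ and $L^\infty$ to $L^\infty$ contractively in the respective norms, and $Tf=\sup_nTf_n$ whenever $f_n\in L^1\cap L^\infty$, $f\in L^\infty$, $f_n\nearrow f$). A doubly substochastic operator $T$ is a Markov (doubly stochastic) operator if $T\mathbf{1}_{\mathbb{R}_+}=\mathbf{1}_{\mathbb{R}_+}$ and $\int_0^\infty Tf(x)\,dx=\int_0^\infty f(x)\,dx$ for all $f\in L^1(\mathbb{R}_+)$. *)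

theory Defs
  imports "HOL-Analysis.Analysis"
begin

text \<open>Bivariate subdistribution function on the closed quadrant [0,oo)^2.
  Values of F outside the quadrant are irrelevant.\<close>
definition subdistribution :: "(real \<Rightarrow> real \<Rightarrow> real) \<Rightarrow> bool" where
  "subdistribution F \<longleftrightarrow>
     (\<forall>x y. 0 \<le> x \<longrightarrow> 0 \<le> y \<longrightarrow> 0 \<le> F x y) \<and>
     (\<forall>x1 x2 y1 y2. 0 \<le> x1 \<longrightarrow> x1 \<le> x2 \<longrightarrow> 0 \<le> y1 \<longrightarrow> y1 \<le> y2 \<longrightarrow>
        F x2 y2 - F x1 y2 - F x2 y1 + F x1 y1 \<ge> 0) \<and>
     (\<forall>x y. 0 \<le> x \<longrightarrow> 0 \<le> y \<longrightarrow> F x y \<le> min x y) \<and>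
     (\<forall>x y x' y'. 0 \<le> x \<longrightarrow> 0 \<le> y \<longrightarrow> 0 \<le> x' \<longrightarrow> 0 \<le> y' \<longrightarrow>
        \<bar>F x y - F x' y'\<bar> \<le> \<bar>x - x'\<bar> + \<bar>y - y'\<bar>)"

definition strict_subdist :: "(real \<Rightarrow> real \<Rightarrow> real) \<Rightarrow> bool" where
  "strict_subdist F \<longleftrightarrow>
     (\<forall>w1\<ge>0. ((\<lambda>t. F w1 t) \<longlongrightarrow> w1) at_top) \<and>
     (\<forall>w2\<ge>0. ((\<lambda>t. F t w2) \<longlongrightarrow> w2) at_top)"

text \<open>The operator T_F f (x) = d/dx int_0^oo (d/dt F(x,t)) f(t) dt
  (derivatives exist almost everywhere; only a.e. properties are used).\<close>
definition TF :: "(real \<Rightarrow> real \<Rightarrow> real) \<Rightarrow> (real \<Rightarrow> real) \<Rightarrow> real \<Rightarrow> real" where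
  "TF F f x = deriv (\<lambda>y. LINT t:{0..}|lebesgue. deriv (\<lambda>s. F y s) t * f t) x"

definition markov_op :: "((real \<Rightarrow> real) \<Rightarrow> real \<Rightarrow> real) \<Rightarrow> bool" where
  "markov_op T \<longleftrightarrow>
     (AE x in lebesgue. 0 \<le> x \<longrightarrow> T (indicator {0..}) x = 1) \<and>
     (\<forall>f. set_integrable lebesgue {0..} f \<longrightarrow>
        set_integrable lebesgue {0..} (T f) \<and>
        (LINT x:{0..}|lebesgue. T f x) = (LINT x:{0..}|lebesgue. f x))"

end

theory Submission
  imports Defs
begin

text \<open>
  For fixed \<open>x\<close> the section \<open>t \<mapsto> F(x, t)\<close> is monotone and 1-Lipschitz, so by Lebesgue's theorem on
  monotone functions, which follows from the Vitali covering theorem applied to Dini derivatives,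
  its derivative \<open>\<partial>\<^sub>2F(x, t)\<close> exists almost everywhere; it lies in \<open>[0, 1]\<close> and increases with \<open>x\<close>.
  Hence \<open>T\<^sub>F f\<close> is the derivative of the primitive \<open>G\<^sub>f(x) = \<integral> \<partial>\<^sub>2F(x, t) f(t) dt\<close>.
  For \<open>f = 1\<close> this primitive is the margin \<open>x \<mapsto> lim F(x, t)\<close> (\<open>t \<rightarrow> \<infinity>\<close>), so \<open>T\<^sub>F 1 = 1\<close> almost
  everywhere exactly when \<open>F(x, t) \<rightarrow> x\<close>. For integrable \<open>f \<ge> 0\<close> the primitive is absolutely
  continuous, so \<open>\<integral> T\<^sub>F f = lim G\<^sub>f(x)\<close> (\<open>x \<rightarrow> \<infinity>\<close>), and this limit is \<open>\<integral> f\<close> because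
  \<open>F(x, t) \<rightarrow> t\<close> forces \<open>\<partial>\<^sub>2F(x, t) \<rightarrow> 1\<close> as \<open>x \<rightarrow> \<infinity>\<close>. Applying both facts to \<open>F\<close> and to its
  transpose gives the theorem.
\<close>

section \<open>Lebesgue's differentiation theorem for monotone functions\<close>

lemma frequently_at_right_0_iff:
  "(\<exists>\<^sub>F h in at_right (0::real). P h) \<longleftrightarrow> (\<forall>\<delta>>0. \<exists>h. 0 < h \<and> h < \<delta> \<and> P h)"
  unfolding frequently_def eventually_at_right_field by auto

lemma frequently_at_left_0_iff:
  "(\<exists>\<^sub>F h in at_left (0::real). P h) \<longleftrightarrow> (\<forall>\<delta>>0. \<exists>h. 0 < h \<and> h < \<delta> \<and> P (- h))"
  unfolding at_left_minus[of 0] frequently_filtermap by (simp add: frequently_at_right_0_iff)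

lemma frequently_at_left_0_reflect:
  "(\<exists>\<^sub>F h in at_left (0::real). P h) \<longleftrightarrow> (\<exists>\<^sub>F h in at_right 0. P (- h))"
  by (simp add: at_left_minus[of 0] frequently_filtermap)

lemma frequently_at_right_0_reflect:
  "(\<exists>\<^sub>F h in at_right (0::real). P h) \<longleftrightarrow> (\<exists>\<^sub>F h in at_left 0. P (- h))"
  by (simp add: at_right_minus[of 0] frequently_filtermap)

lemma measure_cball_real: "0 \<le> r \<Longrightarrow> measure lebesgue (cball (c::real) r) = 2 * r"
  by (simp add: cball_eq_atLeastAtMost)

lemma measure_UN_cballs_le:
  fixes C :: "(real \<times> real) set"
  assumes "finite C" "\<And>i. i \<in> C \<Longrightarrow> 0 \<le> snd i"
  shows "measure lebesgue (\<Union>i\<in>C. cball (fst i) (snd i)) \<le> 2 * (\<Sum>i\<in>C. snd i)"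
proof -
  have "measure lebesgue (\<Union>i\<in>C. cball (fst i) (snd i)) \<le> (\<Sum>i\<in>C. measure lebesgue (cball (fst i) (snd i)))"
    using assms by (intro measure_UNION_le) auto
  also have "\<dots> = 2 * (\<Sum>i\<in>C. snd i)"
    unfolding sum_distrib_left using assms by (intro sum.cong refl measure_cball_real) auto
  finally show ?thesis .
qed

lemma measure_disjoint_UN_cballs:
  fixes C :: "(real \<times> real) set"
  assumes "finite C" "\<And>i. i \<in> C \<Longrightarrow> 0 \<le> snd i"
    and "pairwise (\<lambda>i j. disjnt (cball (fst i) (snd i)) (cball (fst j) (snd j))) C"
  shows "measure lebesgue (\<Union>i\<in>C. cball (fst i) (snd i)) = 2 * (\<Sum>i\<in>C. snd i)"
proof -
  have "measure lebesgue (\<Union>i\<in>C. cball (fst i) (snd i)) = (\<Sum>i\<in>C. measure lebesgue (cball (fst i) (snd i)))"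
    using assms by (intro measure_UNION') (auto simp: pairwise_def)
  also have "\<dots> = 2 * (\<Sum>i\<in>C. snd i)"
    unfolding sum_distrib_left using assms by (intro sum.cong refl measure_cball_real) auto
  finally show ?thesis .
qed

lemma disjnt_cballs_less:
  fixes a b :: real
  assumes "disjnt (cball a r) (cball b s)" "a \<le> b" "0 \<le> r" "0 \<le> s"
  shows "a + r < b - s"
proof (rule ccontr)
  assume "\<not> a + r < b - s"
  then have "max (a - r) (b - s) \<in> cball a r \<inter> cball b s"
    using assms by (auto simp: dist_real_def)
  then show False using assms(1) by (auto simp: disjnt_def)
qed

lemma sum_increments_disjoint_le:
  fixes g :: "real \<Rightarrow> real" and a \<rho> :: "'i \<Rightarrow> real"
  assumes mono: "mono g" and "finite I"
    and "\<And>i. i \<in> I \<Longrightarrow> 0 < \<rho> i \<and> c \<le> a i - \<rho> i \<and> a i + \<rho> i \<le> d"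
    and "pairwise (\<lambda>i j. disjnt (cball (a i) (\<rho> i)) (cball (a j) (\<rho> j))) I"
    and "c \<le> d"
  shows "(\<Sum>i\<in>I. g (a i + \<rho> i) - g (a i - \<rho> i)) \<le> g d - g c"
  using assms(2-)
proof (induction I arbitrary: d rule: finite_psubset_induct)
  case (psubset I)
  show ?case
  proof (cases "I = {}")
    case True
    then show ?thesis using mono psubset.prems by (simp add: monoD)
  next
    case False
    \<comment> \<open>peel off the rightmost ball; the others lie to the left of it\<close>
    have "Max (a ` I) \<in> a ` I" using False psubset.hyps by simp
    then obtain i0 where "i0 \<in> I" "a i0 = Max (a ` I)" by auto
    then have i0: "i0 \<in> I" "\<forall>j\<in>I. a j \<le> a i0" using psubset.hyps by simp_all
    have left: "a j + \<rho> j < a i0 - \<rho> i0" if "j \<in> I - {i0}" for j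
      using that psubset.prems(1)[of j] psubset.prems(1)[of i0] i0 psubset.hyps psubset.prems(2)
      by (intro disjnt_cballs_less) (auto simp: pairwise_def)
    have "(\<Sum>i\<in>I - {i0}. g (a i + \<rho> i) - g (a i - \<rho> i)) \<le> g (a i0 - \<rho> i0) - g c"
      using psubset.prems i0 left by (intro psubset.IH) (auto intro: less_imp_le pairwise_subset)
    moreover have "g (a i0 + \<rho> i0) \<le> g d"
      using psubset.prems(1) i0(1) mono by (auto dest: monoD)
    ultimately show ?thesis
      using i0(1) psubset.hyps by (simp add: sum.remove)
  qed
qed

lemma Vitali_covering_intervals:
  fixes S :: "real set" and P :: "real \<Rightarrow> real \<Rightarrow> bool"
  assumes "\<And>x d. x \<in> S \<Longrightarrow> 0 < d \<Longrightarrow> \<exists>l u. l < u \<and> u - l < d \<and> l \<le> x \<and> x \<le> u \<and> P l u"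
  obtains C where "countable C" "\<And>i. i \<in> C \<Longrightarrow> 0 < snd i \<and> P (fst i - snd i) (fst i + snd i)"
    "pairwise (\<lambda>i j. disjnt (cball (fst i) (snd i)) (cball (fst j) (snd j))) C"
    "negligible (S - (\<Union>i\<in>C. cball (fst i) (snd i)))"
proof -
  let ?K = "{i. 0 < snd i \<and> P (fst i - snd i) (fst i + snd i)}"
  obtain C where "countable C" "C \<subseteq> ?K"
     "pairwise (\<lambda>i j. disjnt (cball (fst i) (snd i)) (cball (fst j) (snd j))) C"
     "negligible (S - (\<Union>i \<in> C. cball (fst i) (snd i)))"
  proof (rule Vitali_covering_theorem_cballs[of ?K snd S fst])
    fix x d assume "x \<in> S" "0 < (d::real)"
    then obtain l u where lu: "l < u" "u - l < d" "l \<le> x" "x \<le> u" "P l u" using assms by blast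
    have "(l + u) / 2 - (u - l) / 2 = l" "(l + u) / 2 + (u - l) / 2 = u" by (simp_all add: field_simps)
    moreover have "x \<in> cball ((l + u) / 2) ((u - l) / 2)"
      using lu by (auto simp: dist_real_def abs_if field_simps)
    ultimately show "\<exists>i. i \<in> ?K \<and> x \<in> cball (fst i) (snd i) \<and> snd i < d"
      using lu by (intro exI[of _ "((l + u) / 2, (u - l) / 2)"]) auto
  qed auto
  then show ?thesis using that by blast
qed

lemma cballs_cover_measure_le:
  fixes C :: "(real \<times> real) set"
  assumes "countable C" "negligible (E - (\<Union>i\<in>C. cball (fst i) (snd i)))"
    and "\<And>J. J \<subseteq> C \<Longrightarrow> finite J \<Longrightarrow> measure lebesgue (\<Union>j\<in>J. cball (fst j) (snd j)) \<le> B"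
  obtains T where "E \<subseteq> T" "T \<in> lmeasurable" "measure lebesgue T \<le> B"
proof -
  define W where "W = (\<Union>j\<in>C. cball (fst j) (snd j))"
  have W: "W \<in> lmeasurable" "measure lebesgue W \<le> B"
    unfolding W_def using fmeasurable_UN_bound[OF assms(1) _ assms(3)] measure_UN_bound[OF assms(1) _ assms(3)]
    by auto
  have N: "negligible (E - W)" using assms(2) unfolding W_def .
  show ?thesis
  proof
    show "E \<subseteq> W \<union> (E - W)" by auto
    show "W \<union> (E - W) \<in> lmeasurable" using W(1) negligible_imp_measurable[OF N] by (rule fmeasurable.Un)
    show "measure lebesgue (W \<union> (E - W)) \<le> B"
      using W N measure_Un_null_set[of W lebesgue "E - W"] by (simp add: fmeasurable_def negligible_iff_null_sets)
  qed
qed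

lemma measure_nested_cballs_le:
  fixes g :: "real \<Rightarrow> real" and J :: "(real \<times> real) set"
  assumes mono: "mono g" and s: "0 < s" and J: "finite J"
    and disj: "pairwise (\<lambda>i j. disjnt (cball (fst i) (snd i)) (cball (fst j) (snd j))) J"
    and disj_p: "pairwise (\<lambda>i j. disjnt (cball (fst i) (snd i)) (cball (fst j) (snd j))) (p ` J)"
    and nested: "\<And>j. j \<in> J \<Longrightarrow> cball (fst j) (snd j) \<subseteq> cball (fst (p j)) (snd (p j))"
    and steep: "\<And>j. j \<in> J \<Longrightarrow> 0 < snd j \<and> s * (2 * snd j) \<le> g (fst j + snd j) - g (fst j - snd j)"
    and flat: "\<And>i. i \<in> p ` J \<Longrightarrow> g (fst i + snd i) - g (fst i - snd i) \<le> r * (2 * snd i)"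
  shows "measure lebesgue (\<Union>j\<in>J. cball (fst j) (snd j))
    \<le> r / s * measure lebesgue (\<Union>i\<in>p ` J. cball (fst i) (snd i))"
proof -
  have inside: "fst (p j) - snd (p j) \<le> fst j - snd j \<and> fst j + snd j \<le> fst (p j) + snd (p j)" if "j \<in> J" for j
  proof -
    have "fst j - snd j \<in> cball (fst (p j)) (snd (p j))" "fst j + snd j \<in> cball (fst (p j)) (snd (p j))"
      using nested[OF that] steep[OF that] by (auto simp: dist_real_def subset_iff)
    then show ?thesis by (auto simp: dist_real_def)
  qed
  have fibre: "(\<Sum>j\<in>{j \<in> J. p j = i}. snd j) \<le> r / s * snd i" if "i \<in> p ` J" for i
  proof -
    have "s * (2 * (\<Sum>j\<in>{j \<in> J. p j = i}. snd j))
        \<le> (\<Sum>j\<in>{j \<in> J. p j = i}. g (fst j + snd j) - g (fst j - snd j))"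
      unfolding sum_distrib_left using steep by (intro sum_mono) auto
    also have "\<dots> \<le> g (fst i + snd i) - g (fst i - snd i)"
    proof (rule sum_increments_disjoint_le[OF mono])
      show "finite {j \<in> J. p j = i}" using J by simp
      show "pairwise (\<lambda>i j. disjnt (cball (fst i) (snd i)) (cball (fst j) (snd j))) {j \<in> J. p j = i}"
        by (rule pairwise_subset[OF disj]) auto
      show "0 < snd j \<and> fst i - snd i \<le> fst j - snd j \<and> fst j + snd j \<le> fst i + snd i"
        if "j \<in> {j \<in> J. p j = i}" for j
        using that steep[of j] inside[of j] by auto
      show "fst i - snd i \<le> fst i + snd i"
        using that steep inside by fastforce
    qed
    also have "\<dots> \<le> r * (2 * snd i)" using flat[OF that] .
    finally show ?thesis using s by (simp add: field_simps)
  qed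
  have pos: "0 \<le> snd i" if "i \<in> p ` J" for i
    using that steep inside by fastforce
  have "measure lebesgue (\<Union>j\<in>J. cball (fst j) (snd j)) \<le> 2 * (\<Sum>j\<in>J. snd j)"
    using J steep by (intro measure_UN_cballs_le) (auto intro: less_imp_le)
  also have "(\<Sum>j\<in>J. snd j) = (\<Sum>i\<in>p ` J. \<Sum>j\<in>{j \<in> J. p j = i}. snd j)"
    using J by (intro sum.group[symmetric]) auto
  also have "\<dots> \<le> r / s * (\<Sum>i\<in>p ` J. snd i)"
    unfolding sum_distrib_left using fibre by (intro sum_mono)
  also have "(\<Sum>i\<in>p ` J. snd i) = measure lebesgue (\<Union>i\<in>p ` J. cball (fst i) (snd i)) / 2"
    using measure_disjoint_UN_cballs[of "p ` J"] J disj_p pos by simp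
  finally show ?thesis by simp
qed

text \<open>Cover by disjoint steep intervals nested in the flat balls: comparing increments of \<open>g\<close>, the
  steep intervals have at most \<open>r / s\<close> of the length of the balls containing them.\<close>

lemma nested_steep_cover:
  fixes g :: "real \<Rightarrow> real" and C :: "(real \<times> real) set" and E U :: "real set"
  assumes mono: "mono g" and "0 \<le> r" "0 < s" and "U \<in> lmeasurable"
    and disj: "pairwise (\<lambda>i j. disjnt (cball (fst i) (snd i)) (cball (fst j) (snd j))) C"
    and flat: "\<And>i. i \<in> C \<Longrightarrow> cball (fst i) (snd i) \<subseteq> U \<and>
      g (fst i + snd i) - g (fst i - snd i) \<le> r * (2 * snd i)"
    and E: "E \<subseteq> (\<Union>i\<in>C. ball (fst i) (snd i))"
    and right: "\<And>x. x \<in> E \<Longrightarrow> \<exists>\<^sub>F h in at_right 0. s < (g (x + h) - g x) / h"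
  obtains T where "E \<subseteq> T" "T \<in> lmeasurable" "measure lebesgue T \<le> r / s * measure lebesgue U"
proof -
  define steep where "steep = (\<lambda>l u. (\<exists>i\<in>C. {l..u} \<subseteq> cball (fst i) (snd i)) \<and> s * (u - l) \<le> g u - g l)"
  have cover: "\<exists>l u. l < u \<and> u - l < d \<and> l \<le> x \<and> x \<le> u \<and> steep l u" if "x \<in> E" "0 < d" for x d
  proof -
    obtain i where i: "i \<in> C" "x \<in> ball (fst i) (snd i)" using \<open>x \<in> E\<close> E by blast
    define e where "e = snd i - dist (fst i) x"
    have "e > 0" using i(2) unfolding e_def by auto
    obtain h where h: "0 < h" "h < min d e" "s < (g (x + h) - g x) / h"
      using right[OF \<open>x \<in> E\<close>, unfolded frequently_at_right_0_iff, rule_format, of "min d e"] \<open>e > 0\<close> \<open>0 < d\<close>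
      by auto
    have "{x..x + h} \<subseteq> cball (fst i) (snd i)"
      using h unfolding e_def by (auto simp: dist_real_def)
    then show ?thesis using h i(1) unfolding steep_def
      by (intro exI[of _ x] exI[of _ "x + h"]) (auto simp: field_simps)
  qed
  obtain C' where C': "countable C'" "\<And>j. j \<in> C' \<Longrightarrow> 0 < snd j \<and> steep (fst j - snd j) (fst j + snd j)"
    "pairwise (\<lambda>i j. disjnt (cball (fst i) (snd i)) (cball (fst j) (snd j))) C'"
    "negligible (E - (\<Union>j\<in>C'. cball (fst j) (snd j)))"
    using Vitali_covering_intervals[of E steep, OF cover] by blast
  have "\<forall>j\<in>C'. \<exists>i\<in>C. cball (fst j) (snd j) \<subseteq> cball (fst i) (snd i)"
    using C'(2) unfolding steep_def by (simp add: cball_eq_atLeastAtMost)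
  then obtain p where p: "\<And>j. j \<in> C' \<Longrightarrow> p j \<in> C \<and> cball (fst j) (snd j) \<subseteq> cball (fst (p j)) (snd (p j))"
    by metis
  have "measure lebesgue (\<Union>j\<in>J. cball (fst j) (snd j)) \<le> r / s * measure lebesgue U"
    if J: "J \<subseteq> C'" "finite J" for J
  proof -
    have pJ: "p ` J \<subseteq> C" using J p by auto
    have "measure lebesgue (\<Union>j\<in>J. cball (fst j) (snd j))
        \<le> r / s * measure lebesgue (\<Union>i\<in>p ` J. cball (fst i) (snd i))"
    proof (rule measure_nested_cballs_le[OF mono \<open>0 < s\<close> J(2)])
      show "pairwise (\<lambda>i j. disjnt (cball (fst i) (snd i)) (cball (fst j) (snd j))) J"
        using C'(3) J(1) by (rule pairwise_subset)
      show "pairwise (\<lambda>i j. disjnt (cball (fst i) (snd i)) (cball (fst j) (snd j))) (p ` J)"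
        using disj pJ by (rule pairwise_subset)
      show "cball (fst j) (snd j) \<subseteq> cball (fst (p j)) (snd (p j))" if "j \<in> J" for j
        using p that J(1) by blast
      show "0 < snd j \<and> s * (2 * snd j) \<le> g (fst j + snd j) - g (fst j - snd j)" if "j \<in> J" for j
        using C'(2)[of j] that J(1) unfolding steep_def by auto
      show "g (fst i + snd i) - g (fst i - snd i) \<le> r * (2 * snd i)" if "i \<in> p ` J" for i
        using flat pJ that by blast
    qed
    also have "\<dots> \<le> r / s * measure lebesgue U"
    proof -
      have "(\<Union>i\<in>p ` J. cball (fst i) (snd i)) \<subseteq> U" using flat pJ by blast
      then show ?thesis using \<open>0 \<le> r\<close> \<open>0 < s\<close> \<open>U \<in> lmeasurable\<close> J
        by (intro mult_left_mono measure_mono_fmeasurable) (auto intro!: fmeasurable.finite_UN)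
    qed
    finally show ?thesis .
  qed
  from cballs_cover_measure_le[OF C'(1,4) this] that show ?thesis by blast
qed

lemma slope_gap_cover:
  fixes g :: "real \<Rightarrow> real" and E U :: "real set"
  assumes mono: "mono g" and rs: "0 < r" "r < s"
    and U: "open U" "bounded U" "E \<subseteq> U"
    and left: "\<And>x. x \<in> E \<Longrightarrow> \<exists>\<^sub>F h in at_left 0. (g (x + h) - g x) / h < r"
    and right: "\<And>x. x \<in> E \<Longrightarrow> \<exists>\<^sub>F h in at_right 0. s < (g (x + h) - g x) / h"
  obtains T where "E \<subseteq> T" "T \<in> lmeasurable" "measure lebesgue T \<le> r / s * measure lebesgue U"
proof -
  define flat where "flat = (\<lambda>l u. {l..u} \<subseteq> U \<and> g u - g l \<le> r * (u - l))"
  have cover: "\<exists>l u. l < u \<and> u - l < d \<and> l \<le> x \<and> x \<le> u \<and> flat l u" if "x \<in> E" "0 < d" for x d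
  proof -
    obtain e where e: "e > 0" "ball x e \<subseteq> U" using U \<open>x \<in> E\<close> openE by blast
    obtain h where h: "0 < h" "h < min d e" "(g (x - h) - g x) / (- h) < r"
      using left[OF \<open>x \<in> E\<close>, unfolded frequently_at_left_0_iff, rule_format, of "min d e"] e \<open>0 < d\<close>
      by auto
    have "{x - h..x} \<subseteq> ball x e" using h by (auto simp: dist_real_def)
    then show ?thesis using h e unfolding flat_def
      by (intro exI[of _ "x - h"] exI[of _ x]) (auto simp: field_simps)
  qed
  obtain C where C: "countable C" "\<And>i. i \<in> C \<Longrightarrow> 0 < snd i \<and> flat (fst i - snd i) (fst i + snd i)"
    "pairwise (\<lambda>i j. disjnt (cball (fst i) (snd i)) (cball (fst j) (snd j))) C"
    "negligible (E - (\<Union>i\<in>C. cball (fst i) (snd i)))"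
    using Vitali_covering_intervals[of E flat, OF cover] by blast
  obtain T where T: "E \<inter> (\<Union>i\<in>C. ball (fst i) (snd i)) \<subseteq> T" "T \<in> lmeasurable"
    "measure lebesgue T \<le> r / s * measure lebesgue U"
  proof (rule nested_steep_cover[OF mono _ _ _ C(3)])
    show "0 \<le> r" "0 < s" "U \<in> lmeasurable" using rs U by (auto intro: lmeasurable_open)
    show "cball (fst i) (snd i) \<subseteq> U \<and> g (fst i + snd i) - g (fst i - snd i) \<le> r * (2 * snd i)"
      if "i \<in> C" for i
      using C(2)[OF that] unfolding flat_def by (simp add: cball_eq_atLeastAtMost)
    show "\<exists>\<^sub>F h in at_right 0. s < (g (x + h) - g x) / h" if "x \<in> E \<inter> (\<Union>i\<in>C. ball (fst i) (snd i))" for x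
      using right that by blast
  qed auto
  define N where "N = (E - (\<Union>i\<in>C. cball (fst i) (snd i))) \<union> (\<Union>i\<in>C. sphere (fst i) (snd i))"
  have N: "negligible N"
    unfolding N_def using C by (intro negligible_Un negligible_countable_Union) (auto intro: negligible_sphere)
  show ?thesis
  proof
    show "E \<subseteq> T \<union> N" using T(1) unfolding N_def by (auto simp flip: cball_diff_eq_sphere)
    show "T \<union> N \<in> lmeasurable" using T(2) negligible_imp_measurable[OF N] by (rule fmeasurable.Un)
    show "measure lebesgue (T \<union> N) \<le> r / s * measure lebesgue U"
      using T N by (simp add: measure_Un_null_set fmeasurable_def negligible_iff_null_sets)
  qed
qed

lemma lmeasurable_hull:
  fixes E S :: "'a::euclidean_space set"
  assumes "E \<subseteq> S" "S \<in> lmeasurable"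
  obtains H where "H \<in> lmeasurable" "E \<subseteq> H" "H \<subseteq> S"
    "\<And>T. T \<in> lmeasurable \<Longrightarrow> E \<subseteq> T \<Longrightarrow> measure lebesgue H \<le> measure lebesgue T"
proof -
  obtain H0 where H0: "H0 \<in> sets lebesgue" "E \<subseteq> H0" "outer_measure_of lebesgue E = emeasure lebesgue H0"
    using outer_measure_of_attain[of E lebesgue] by auto
  show ?thesis
  proof
    show "S \<inter> H0 \<in> lmeasurable" using assms(2) H0(1) by (rule fmeasurable_Int_fmeasurable)
    show "E \<subseteq> S \<inter> H0" "S \<inter> H0 \<subseteq> S" using assms(1) H0(2) by auto
    fix T assume T: "T \<in> lmeasurable" "E \<subseteq> T"
    have "emeasure lebesgue (S \<inter> H0) \<le> outer_measure_of lebesgue E"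
      unfolding H0(3) using H0(1) by (intro emeasure_mono) auto
    also have "\<dots> \<le> emeasure lebesgue T"
      unfolding outer_measure_of_def using T by (intro INF_lower) (auto simp: fmeasurable_def)
    finally show "measure lebesgue (S \<inter> H0) \<le> measure lebesgue T"
      using \<open>S \<inter> H0 \<in> lmeasurable\<close> T(1) by (simp add: emeasure_eq_measure2 ennreal_le_iff)
  qed
qed

lemma open_superset_measure_le:
  fixes H S :: "'a::euclidean_space set"
  assumes "H \<in> lmeasurable" "H \<subseteq> S" "open S" "0 < e"
  obtains V where "open V" "H \<subseteq> V" "V \<subseteq> S" "measure lebesgue V \<le> measure lebesgue H + e"
proof -
  obtain U where U: "open U" "H \<subseteq> U" "U - H \<in> lmeasurable" "emeasure lebesgue (U - H) < ennreal e"
    using sets_lebesgue_outer_open[of H e] assms(1,4) by (auto simp: fmeasurable_def)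
  show ?thesis
  proof
    show "open (U \<inter> S)" "H \<subseteq> U \<inter> S" "U \<inter> S \<subseteq> S" using U assms by auto
    have "measure lebesgue (U \<inter> S) \<le> measure lebesgue (H \<union> (U - H))"
    proof (rule measure_mono_fmeasurable)
      show "U \<inter> S \<subseteq> H \<union> (U - H)" by blast
      show "U \<inter> S \<in> sets lebesgue" using U(1) assms(3) by auto
      show "H \<union> (U - H) \<in> lmeasurable" using assms(1) U(3) by (rule fmeasurable.Un)
    qed
    also have "\<dots> \<le> measure lebesgue H + measure lebesgue (U - H)"
      using assms(1) U(3) by (intro measure_Un_le) (auto simp: fmeasurable_def)
    also have "measure lebesgue (U - H) \<le> e"
      using U(3,4) assms(4) by (simp add: emeasure_eq_measure2 ennreal_less_iff less_imp_le)
    finally show "measure lebesgue (U \<inter> S) \<le> measure lebesgue H + e" by simp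
  qed
qed

text \<open>A measurable hull \<open>H\<close> of the gap set satisfies \<open>\<mu>(H) \<le> r / s \<cdot> \<mu>(V)\<close> for every open \<open>V \<supseteq> H\<close>,
  hence \<open>\<mu>(H) \<le> r / s \<cdot> \<mu>(H)\<close>.\<close>

lemma negligible_slope_gap_left_right:
  fixes g :: "real \<Rightarrow> real" and E :: "real set"
  assumes mono: "mono g" and rs: "0 < r" "r < s" and E: "E \<subseteq> {a<..<b}"
    and left: "\<And>x. x \<in> E \<Longrightarrow> \<exists>\<^sub>F h in at_left 0. (g (x + h) - g x) / h < r"
    and right: "\<And>x. x \<in> E \<Longrightarrow> \<exists>\<^sub>F h in at_right 0. s < (g (x + h) - g x) / h"
  shows "negligible E"
proof -
  have "{a<..<b} \<in> lmeasurable" by (simp add: lmeasurable_open)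
  then obtain H where H: "H \<in> lmeasurable" "E \<subseteq> H" "H \<subseteq> {a<..<b}"
    and hull: "\<And>T. T \<in> lmeasurable \<Longrightarrow> E \<subseteq> T \<Longrightarrow> measure lebesgue H \<le> measure lebesgue T"
    using lmeasurable_hull[OF E] by blast
  have shrink: "measure lebesgue H \<le> r / s * (measure lebesgue H + e)" if "e > 0" for e
  proof -
    obtain V where V: "open V" "H \<subseteq> V" "V \<subseteq> {a<..<b}" "measure lebesgue V \<le> measure lebesgue H + e"
      using open_superset_measure_le[OF H(1,3) open_greaterThanLessThan \<open>e > 0\<close>] by blast
    have "bounded V" using V(3) by (rule bounded_subset[rotated]) simp
    moreover have "E \<subseteq> V" using H(2) V(2) by blast
    ultimately obtain T where T: "E \<subseteq> T" "T \<in> lmeasurable" "measure lebesgue T \<le> r / s * measure lebesgue V"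
      using slope_gap_cover[OF mono rs V(1) _ _ left right] by blast
    have "r / s * measure lebesgue V \<le> r / s * (measure lebesgue H + e)"
      using V(4) rs by (intro mult_left_mono) auto
    then show ?thesis using hull[OF T(2,1)] T(3) by linarith
  qed
  have "measure lebesgue H * (1 - r / s) \<le> 0"
  proof (rule field_le_epsilon)
    fix e :: real assume "0 < e"
    then have "measure lebesgue H \<le> r / s * (measure lebesgue H + e * s / r)"
      using shrink[of "e * s / r"] rs by simp
    also have "\<dots> = r / s * measure lebesgue H + e" using rs by (simp add: field_simps)
    finally show "measure lebesgue H * (1 - r / s) \<le> 0 + e" by (simp add: algebra_simps)
  qed
  with rs have "measure lebesgue H = 0"
    by (smt (verit) divide_less_eq_1_pos measure_nonneg mult_le_0_iff)
  then show ?thesis using H by (metis negligible_iff_measure0 negligible_subset)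
qed

lemma negligible_slope_gap_right_left:
  fixes g :: "real \<Rightarrow> real" and E :: "real set"
  assumes mono: "mono g" and rs: "0 < r" "r < s" and E: "E \<subseteq> {a<..<b}"
    and right: "\<And>x. x \<in> E \<Longrightarrow> \<exists>\<^sub>F h in at_right 0. (g (x + h) - g x) / h < r"
    and left: "\<And>x. x \<in> E \<Longrightarrow> \<exists>\<^sub>F h in at_left 0. s < (g (x + h) - g x) / h"
  shows "negligible E"
proof -
  define g' where "g' y = - g (- y)" for y
  have "mono g'" using mono unfolding g'_def mono_def by simp
  \<comment> \<open>reflecting \<open>g\<close> swaps the left and right difference quotients\<close>
  have Q: "(g' (- x + h) - g' (- x)) / h = (g (x + - h) - g x) / - h" for x h
    unfolding g'_def by (cases "h = 0") (simp_all add: field_simps)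
  have "negligible (uminus ` E)"
  proof (rule negligible_slope_gap_left_right[OF \<open>mono g'\<close> rs, of _ "- b" "- a"])
    show "uminus ` E \<subseteq> {- b<..<- a}" using E by auto
  next
    fix y assume "y \<in> uminus ` E"
    then obtain x where "x \<in> E" "y = - x" by auto
    show "\<exists>\<^sub>F h in at_left 0. (g' (y + h) - g' y) / h < r"
      using right[OF \<open>x \<in> E\<close>] unfolding \<open>y = - x\<close> Q frequently_at_left_0_reflect by simp
    show "\<exists>\<^sub>F h in at_right 0. s < (g' (y + h) - g' y) / h"
      using left[OF \<open>x \<in> E\<close>] unfolding \<open>y = - x\<close> Q frequently_at_right_0_reflect by simp
  qed
  then have "negligible (uminus ` uminus ` E)"
    by (rule negligible_differentiable_image_negligible[OF order_refl]) (auto intro!: derivative_intros)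
  then show ?thesis by (simp add: image_image)
qed

lemma negligible_infinite_right_slope:
  fixes g :: "real \<Rightarrow> real" and E :: "real set"
  assumes mono: "mono g" and E: "E \<subseteq> {a<..<b}"
    and steep: "\<And>x M. x \<in> E \<Longrightarrow> \<exists>\<^sub>F h in at_right 0. M < (g (x + h) - g x) / h"
  shows "negligible E"
  unfolding negligible_outer_le
proof (intro allI impI)
  fix e :: real assume "0 < e"
  show "\<exists>T. E \<subseteq> T \<and> T \<in> lmeasurable \<and> measure lebesgue T \<le> e"
  proof (cases "E = {}")
    case True
    then show ?thesis using \<open>0 < e\<close> by (intro exI[of _ "{}"]) auto
  next
    case False
    then have "a < b" using E by auto
    define K where "K = g (b + 1) - g (a - 1)"
    define M where "M = K / e + 1"
    have "0 \<le> K" unfolding K_def using monoD[OF mono, of "a - 1" "b + 1"] \<open>a < b\<close> by simp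
    then have "0 < M" "K / M \<le> e"
      unfolding M_def using \<open>0 < e\<close> by (auto simp: field_simps add_nonneg_pos)
    define P where "P = (\<lambda>l u. a - 1 \<le> l \<and> u \<le> b + 1 \<and> M * (u - l) \<le> g u - g l)"
    have cover: "\<exists>l u. l < u \<and> u - l < d \<and> l \<le> x \<and> x \<le> u \<and> P l u" if "x \<in> E" "0 < d" for x d
    proof -
      obtain h where h: "0 < h" "h < min d 1" "M < (g (x + h) - g x) / h"
        using steep[OF \<open>x \<in> E\<close>, of M, unfolded frequently_at_right_0_iff, rule_format, of "min d 1"] \<open>0 < d\<close>
        by auto
      have "a - 1 \<le> x" "x + h \<le> b + 1" using h E \<open>x \<in> E\<close> by auto
      then show ?thesis using h unfolding P_def
        by (intro exI[of _ x] exI[of _ "x + h"]) (auto simp: field_simps)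
    qed
    obtain C where C: "countable C" "\<And>i. i \<in> C \<Longrightarrow> 0 < snd i \<and> P (fst i - snd i) (fst i + snd i)"
      "pairwise (\<lambda>i j. disjnt (cball (fst i) (snd i)) (cball (fst j) (snd j))) C"
      "negligible (E - (\<Union>i\<in>C. cball (fst i) (snd i)))"
      using Vitali_covering_intervals[of E P, OF cover] by blast
    have bound: "measure lebesgue (\<Union>j\<in>J. cball (fst j) (snd j)) \<le> e" if J: "J \<subseteq> C" "finite J" for J
    proof -
      have "measure lebesgue (\<Union>j\<in>J. cball (fst j) (snd j)) \<le> 2 * (\<Sum>j\<in>J. snd j)"
        using J C(2) by (intro measure_UN_cballs_le) (auto intro: less_imp_le)
      also have "\<dots> \<le> (\<Sum>j\<in>J. g (fst j + snd j) - g (fst j - snd j)) / M"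
        unfolding sum_distrib_left sum_divide_distrib using J C(2) \<open>0 < M\<close>
        by (intro sum_mono) (auto simp: P_def field_simps)
      also have "\<dots> \<le> K / M"
        unfolding K_def using J C \<open>0 < M\<close> \<open>a < b\<close>
        by (intro divide_right_mono sum_increments_disjoint_le[OF mono])
          (auto simp: P_def intro: pairwise_subset)
      finally show ?thesis using \<open>K / M \<le> e\<close> by simp
    qed
    from cballs_cover_measure_le[OF C(1,4) bound] show ?thesis by blast
  qed
qed

lemma rat_between_ereal:
  fixes a b :: ereal
  assumes "a < b"
  obtains r where "r \<in> \<rat>" "a < ereal r" "ereal r < b"
proof -
  obtain z where z: "a < ereal z" "ereal z < b" using ereal_dense2[OF assms] by blast
  obtain z' where z': "a < ereal z'" "ereal z' < ereal z" using ereal_dense2[OF z(1)] by blast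
  obtain r where "r \<in> \<rat>" "z' < r" "r < z" using Rats_dense_in_real[of z' z] z'(2) by auto
  then show ?thesis using that z z' by (meson ereal_less_eq(3) less_ereal.simps(1) less_le_trans order.strict_trans)
qed

lemma frequently_less_if_Liminf_less:
  fixes f :: "'a \<Rightarrow> real"
  assumes "Liminf F (\<lambda>x. ereal (f x)) < ereal c"
  shows "\<exists>\<^sub>F x in F. f x < c"
proof (rule ccontr)
  assume "\<not> (\<exists>\<^sub>F x in F. f x < c)"
  then have "\<forall>\<^sub>F x in F. ereal c \<le> ereal (f x)" unfolding not_frequently by (auto elim: eventually_mono)
  then show False using assms Liminf_bounded by (metis not_le)
qed

lemma frequently_greater_if_Limsup_greater:
  fixes f :: "'a \<Rightarrow> real"
  assumes "ereal c < Limsup F (\<lambda>x. ereal (f x))"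
  shows "\<exists>\<^sub>F x in F. c < f x"
proof (rule ccontr)
  assume "\<not> (\<exists>\<^sub>F x in F. c < f x)"
  then have "\<forall>\<^sub>F x in F. ereal (f x) \<le> ereal c" unfolding not_frequently by (auto elim: eventually_mono)
  then show False using assms Limsup_bounded by (metis not_le)
qed

lemma mono_differentiable_atI:
  fixes g :: "real \<Rightarrow> real" and x :: real
  defines "Q \<equiv> \<lambda>h. (g (x + h) - g x) / h"
  assumes mono: "mono g"
    and gap_left_right: "\<And>r s. r \<in> \<rat> \<Longrightarrow> s \<in> \<rat> \<Longrightarrow> 0 < r \<Longrightarrow> r < s \<Longrightarrow>
      (\<exists>\<^sub>F h in at_left 0. Q h < r) \<Longrightarrow> (\<exists>\<^sub>F h in at_right 0. s < Q h) \<Longrightarrow> False"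
    and gap_right_left: "\<And>r s. r \<in> \<rat> \<Longrightarrow> s \<in> \<rat> \<Longrightarrow> 0 < r \<Longrightarrow> r < s \<Longrightarrow>
      (\<exists>\<^sub>F h in at_right 0. Q h < r) \<Longrightarrow> (\<exists>\<^sub>F h in at_left 0. s < Q h) \<Longrightarrow> False"
    and bounded: "\<forall>\<^sub>F h in at_right 0. Q h \<le> M"
  shows "g differentiable (at x)"
proof -
  define f where "f = (\<lambda>h. ereal (Q h))"
  have f_nonneg: "0 \<le> f h" for h
    using monoD[OF mono, of x "x + h"] monoD[OF mono, of "x + h" x]
    unfolding f_def Q_def by (cases "0 \<le> h") (auto simp: divide_nonpos_neg divide_nonneg_nonneg)
  have crossed: "Limsup F1 f \<le> Liminf F2 f"
    if gap: "\<And>r s. r \<in> \<rat> \<Longrightarrow> s \<in> \<rat> \<Longrightarrow> 0 < r \<Longrightarrow> r < s \<Longrightarrow>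
      (\<exists>\<^sub>F h in F2. Q h < r) \<Longrightarrow> (\<exists>\<^sub>F h in F1. s < Q h) \<Longrightarrow> False"
      and "F2 \<noteq> bot" for F1 F2
  proof (rule ccontr)
    assume "\<not> Limsup F1 f \<le> Liminf F2 f"
    then obtain r where r: "r \<in> \<rat>" "Liminf F2 f < ereal r" "ereal r < Limsup F1 f"
      using rat_between_ereal[of "Liminf F2 f" "Limsup F1 f"] by (auto simp: not_le)
    obtain s where s: "s \<in> \<rat>" "ereal r < ereal s" "ereal s < Limsup F1 f"
      using rat_between_ereal[OF r(3)] by blast
    have "0 \<le> Liminf F2 f" using f_nonneg by (intro Liminf_bounded) auto
    then have "0 < r" using r(2) by (metis ereal_less(2) le_less_trans)
    then show False
      using gap[OF r(1) s(1)] s(2) frequently_less_if_Liminf_less[OF r(2)[unfolded f_def]]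
        frequently_greater_if_Limsup_greater[OF s(3)[unfolded f_def]] by simp
  qed
  define D where "D = Limsup (at_right 0) f"
  have "Liminf (at_right 0) f \<le> D" "Liminf (at_left 0) f \<le> Limsup (at_left 0) f"
    unfolding D_def by (simp_all add: Liminf_le_Limsup)
  moreover have "D \<le> Liminf (at_left 0) f"
    unfolding D_def by (rule crossed[OF gap_left_right]) auto
  moreover have "Limsup (at_left 0) f \<le> Liminf (at_right 0) f"
    by (rule crossed[OF gap_right_left]) auto
  ultimately have lims: "Liminf (at_right 0) f = D" "Limsup (at_right 0) f = D"
    "Liminf (at_left 0) f = D" "Limsup (at_left 0) f = D"
    unfolding D_def by (auto intro: order.antisym)
  have "D \<le> ereal M"
    unfolding D_def f_def using bounded by (intro Limsup_bounded) (auto elim: eventually_mono)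
  moreover have "0 \<le> D" using lims(1) f_nonneg by (metis Liminf_bounded always_eventually)
  ultimately obtain l where l: "D = ereal l" by (cases D) auto
  have "(f \<longlongrightarrow> ereal l) (at_right 0)" "(f \<longlongrightarrow> ereal l) (at_left 0)"
    using lims unfolding l by (subst tendsto_iff_Liminf_eq_Limsup; simp)+
  then have "(Q \<longlongrightarrow> l) (at_right 0)" "(Q \<longlongrightarrow> l) (at_left 0)"
    unfolding f_def by simp_all
  then have "(Q \<longlongrightarrow> l) (at 0)" by (rule filterlim_split_at[rotated])
  then have "DERIV g x :> l" unfolding DERIV_def Q_def .
  then show ?thesis by (auto simp: real_differentiable_def)
qed

lemma negligible_nondifferentiable_mono_Ioo:
  fixes g :: "real \<Rightarrow> real"
  assumes mono: "mono g"
  shows "negligible {x \<in> {a<..<b}. \<not> g differentiable (at x)}"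
proof -
  define Q where "Q x h = (g (x + h) - g x) / h" for x h :: real
  define A where "A r s = {x \<in> {a<..<b}. (\<exists>\<^sub>F h in at_left 0. Q x h < r) \<and> (\<exists>\<^sub>F h in at_right 0. s < Q x h)}"
    for r s
  define B where "B r s = {x \<in> {a<..<b}. (\<exists>\<^sub>F h in at_right 0. Q x h < r) \<and> (\<exists>\<^sub>F h in at_left 0. s < Q x h)}"
    for r s
  define C where "C = {x \<in> {a<..<b}. \<forall>M. \<exists>\<^sub>F h in at_right 0. M < Q x h}"
  define R :: "(real \<times> real) set" where "R = {p \<in> \<rat> \<times> \<rat>. 0 < fst p \<and> fst p < snd p}"
  have "{x \<in> {a<..<b}. \<not> g differentiable (at x)} \<subseteq>
      (\<Union>p\<in>R. A (fst p) (snd p)) \<union> (\<Union>p\<in>R. B (fst p) (snd p)) \<union> C"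
  proof (rule subsetI, rule ccontr)
    fix x assume x: "x \<in> {x \<in> {a<..<b}. \<not> g differentiable (at x)}"
      and "x \<notin> (\<Union>p\<in>R. A (fst p) (snd p)) \<union> (\<Union>p\<in>R. B (fst p) (snd p)) \<union> C"
    then obtain M where M: "\<forall>\<^sub>F h in at_right 0. Q x h \<le> M"
      and AB: "\<And>r s. (r, s) \<in> R \<Longrightarrow> x \<notin> A r s \<and> x \<notin> B r s"
      unfolding C_def by (force simp: not_frequently not_less)
    have "g differentiable (at x)"
    proof (rule mono_differentiable_atI[OF mono])
      show "\<forall>\<^sub>F h in at_right 0. (g (x + h) - g x) / h \<le> M" using M unfolding Q_def .
    next
      fix r s assume "r \<in> \<rat>" "s \<in> \<rat>" "0 < r" "r < s"
        "\<exists>\<^sub>F h in at_left 0. (g (x + h) - g x) / h < r" "\<exists>\<^sub>F h in at_right 0. s < (g (x + h) - g x) / h"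
      then show False using AB[of r s] x unfolding A_def R_def Q_def by simp
    next
      fix r s assume "r \<in> \<rat>" "s \<in> \<rat>" "0 < r" "r < s"
        "\<exists>\<^sub>F h in at_right 0. (g (x + h) - g x) / h < r" "\<exists>\<^sub>F h in at_left 0. s < (g (x + h) - g x) / h"
      then show False using AB[of r s] x unfolding B_def R_def Q_def by simp
    qed
    with x show False by simp
  qed
  moreover have "negligible ((\<Union>p\<in>R. A (fst p) (snd p)) \<union> (\<Union>p\<in>R. B (fst p) (snd p)) \<union> C)"
  proof -
    have "countable R" unfolding R_def by (rule countable_subset[of _ "\<rat> \<times> \<rat>"]) (auto intro: countable_SIGMA countable_rat)
    moreover have "negligible (A r s)" "negligible (B r s)" if "(r, s) \<in> R" for r s
    proof -
      from that have rs: "0 < r" "r < s" unfolding R_def by auto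
      show "negligible (A r s)"
        by (rule negligible_slope_gap_left_right[OF mono rs, of _ a b]) (simp_all add: A_def Q_def subset_iff)
      show "negligible (B r s)"
        by (rule negligible_slope_gap_right_left[OF mono rs, of _ a b]) (simp_all add: B_def Q_def subset_iff)
    qed
    moreover have "negligible C"
      by (rule negligible_infinite_right_slope[OF mono, of C a b]) (simp_all add: C_def Q_def subset_iff)
    ultimately show ?thesis by (intro negligible_Un negligible_countable_Union countable_image) auto
  qed
  ultimately show ?thesis by (rule negligible_subset[rotated])
qed

lemma mono_AE_differentiable:
  fixes g :: "real \<Rightarrow> real"
  assumes "mono g"
  shows "AE x in lebesgue. g differentiable (at x)"
proof -
  have "{x. \<not> g differentiable (at x)} = (\<Union>n::nat. {x \<in> {- real n<..<real n}. \<not> g differentiable (at x)})"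
  proof safe
    fix x assume "\<not> g differentiable (at x)"
    moreover obtain n :: nat where "\<bar>x\<bar> < real n" using reals_Archimedean2 by blast
    ultimately show "x \<in> (\<Union>n::nat. {x \<in> {- real n<..<real n}. \<not> g differentiable (at x)})"
      by (intro UN_I[of n]) (auto simp: abs_less_iff)
  qed
  then have "negligible {x. \<not> g differentiable (at x)}"
    using negligible_nondifferentiable_mono_Ioo[OF assms] by (simp add: negligible_Union_nat)
  then show ?thesis
    by (intro AE_I'[of "{x. \<not> g differentiable (at x)}"]) (auto simp: negligible_iff_null_sets)
qed

section \<open>Integrating the derivative of a monotone function\<close>

lemma difference_quotients_LIMSEQ_deriv:
  fixes g :: "real \<Rightarrow> real"
  assumes "g differentiable (at x)"
  shows "(\<lambda>n. (g (x + 1 / Suc n) - g x) * Suc n) \<longlonglongrightarrow> deriv g x"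
proof -
  have "((\<lambda>h. (g (x + h) - g x) / h) \<longlongrightarrow> deriv g x) (at 0)"
    using assms unfolding DERIV_deriv_iff_real_differentiable[symmetric] DERIV_def .
  moreover have "filterlim (\<lambda>n. 1 / real (Suc n)) (at 0) sequentially"
    using LIMSEQ_inverse_real_of_nat by (intro filterlim_atI) (simp_all add: inverse_eq_divide)
  ultimately show ?thesis
    using filterlim_compose by fastforce
qed

lemma deriv_nonneg_mono:
  fixes g :: "real \<Rightarrow> real"
  assumes "mono g" "g differentiable (at x)"
  shows "0 \<le> deriv g x"
  using difference_quotients_LIMSEQ_deriv[OF assms(2)] monoD[OF assms(1)]
  by (intro LIMSEQ_le_const) auto

lemma abs_deriv_le_lipschitz:
  fixes g :: "real \<Rightarrow> real"
  assumes lip: "\<And>x y. \<bar>g x - g y\<bar> \<le> L * \<bar>x - y\<bar>" and "g differentiable (at x)"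
  shows "\<bar>deriv g x\<bar> \<le> L"
proof (rule LIMSEQ_le_const2[OF tendsto_rabs[OF difference_quotients_LIMSEQ_deriv[OF assms(2)]]])
  have "\<bar>g (x + 1 / Suc n) - g x\<bar> * Suc n \<le> L * (1 / Suc n) * Suc n" for n
    using lip[of "x + 1 / Suc n" x] by (intro mult_right_mono) auto
  then show "\<exists>N. \<forall>n\<ge>N. \<bar>(g (x + 1 / Suc n) - g x) * Suc n\<bar> \<le> L"
    by (simp add: abs_mult)
qed

lemma borel_measurable_deriv_mono:
  fixes g :: "real \<Rightarrow> real"
  assumes mono: "mono g"
  shows "deriv g \<in> borel_measurable lebesgue"
proof -
  define q where "q = (\<lambda>n x. (g (x + 1 / Suc n) - g x) * Suc n)"
  have "g \<in> borel_measurable borel" using borel_measurable_mono[OF mono] .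
  then have "q n \<in> borel_measurable lborel" for n
    unfolding q_def measurable_lborel2 by measurable
  then have "(\<lambda>x. lim (\<lambda>n. q n x)) \<in> borel_measurable lebesgue"
    by (intro borel_measurable_lim_metric measurable_completion)
  moreover have "AE x in lebesgue. lim (\<lambda>n. q n x) = deriv g x"
    using mono_AE_differentiable[OF mono]
    by (rule eventually_mono) (unfold q_def, intro limI difference_quotients_LIMSEQ_deriv)
  ultimately show ?thesis by (rule borel_measurable_AE)
qed

lemma integral_difference_quotient_mono_le:
  fixes g :: "real \<Rightarrow> real"
  assumes mono: "mono g" and "a \<le> b" "0 < h"
  shows "(\<lambda>x. (g (x + h) - g x) / h) integrable_on {a..b}"
    and "integral {a..b} (\<lambda>x. (g (x + h) - g x) / h) \<le> g (b + h) - g a"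
proof -
  have int: "g integrable_on {c..d}" for c d
    by (rule integrable_on_mono_on) (rule mono_imp_mono_on[OF mono])
  have shift: "(\<lambda>x. g (x + h)) = g \<circ> (+) h" by (auto simp: add.commute)
  have shift_int: "(\<lambda>x. g (x + h)) integrable_on {a..b}"
    unfolding shift integrable_on_shift_Icc_real using int .
  then show "(\<lambda>x. (g (x + h) - g x) / h) integrable_on {a..b}"
    using int by (intro integrable_on_divide integrable_diff)
  have "integral {a..b} g + integral {b..b+h} g = integral {a..b+h} g"
    "integral {a..a+h} g + integral {a+h..b+h} g = integral {a..b+h} g"
    using assms int by (intro Henstock_Kurzweil_Integration.integral_combine; simp)+
  moreover have "integral {a..b} (\<lambda>x. g (x + h) - g x) = integral {a+h..b+h} g - integral {a..b} g"
    using integral_diff[OF shift_int int] unfolding shift integral_shift_Icc_real by simp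
  moreover have "integral {b..b+h} g \<le> integral {b..b+h} (\<lambda>x. g (b + h))"
    using int by (intro integral_le) (auto intro: monoD[OF mono])
  moreover have "integral {a..a+h} (\<lambda>x. g a) \<le> integral {a..a+h} g"
    using int by (intro integral_le) (auto intro: monoD[OF mono])
  ultimately have "integral {a..b} (\<lambda>x. g (x + h) - g x) \<le> h * (g (b + h) - g a)"
    using \<open>0 < h\<close> by (simp add: algebra_simps)
  then show "integral {a..b} (\<lambda>x. (g (x + h) - g x) / h) \<le> g (b + h) - g a"
    using \<open>0 < h\<close> by (simp add: field_simps)
qed

lemma nn_integral_deriv_mono_le:
  fixes g :: "real \<Rightarrow> real"
  assumes mono: "mono g" and "a \<le> b" "0 < \<delta>"
  shows "(\<integral>\<^sup>+ x. ennreal (deriv g x) * indicator {a..b} x \<partial>lebesgue) \<le> ennreal (g (b + \<delta>) - g a)"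
proof -
  define h where "h = (\<lambda>n. 1 / real (Suc n))"
  define q where "q = (\<lambda>n x. (g (x + h n) - g x) / h n)"
  define u where "u = (\<lambda>n x. ennreal (q n x) * indicator {a..b} x)"
  have "g \<in> borel_measurable borel" using borel_measurable_mono[OF mono] .
  then have "u n \<in> borel_measurable lborel" for n
    unfolding u_def q_def measurable_lborel2 by measurable
  then have u_meas: "u n \<in> borel_measurable lebesgue" for n
    by (rule measurable_completion)
  obtain N :: nat where N: "1 / \<delta> < N" using reals_Archimedean2 by blast
  have h_le: "h n \<le> \<delta>" if "N \<le> n" for n
  proof -
    have "1 < \<delta> * real N" using N \<open>0 < \<delta>\<close> by (simp add: field_simps)
    also have "\<dots> \<le> \<delta> * real (Suc n)" using that \<open>0 < \<delta>\<close> by simp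
    finally show ?thesis using \<open>0 < \<delta>\<close> unfolding h_def by (simp add: field_simps)
  qed
  have u_bound: "integral\<^sup>N lebesgue (u n) \<le> ennreal (g (b + \<delta>) - g a)" if "N \<le> n" for n
  proof -
    have "0 < h n" by (simp add: h_def)
    have "integral\<^sup>N lebesgue (u n) = ennreal (integral {a..b} (q n))"
      unfolding u_def nn_integral_completion
      using integral_difference_quotient_mono_le(1)[OF mono \<open>a \<le> b\<close> \<open>0 < h n\<close>] monoD[OF mono] \<open>0 < h n\<close>
      by (intro nn_integral_has_integral_lebesgue' integrable_integral) (auto simp: q_def)
    also have "\<dots> \<le> ennreal (g (b + h n) - g a)"
      using integral_difference_quotient_mono_le(2)[OF mono \<open>a \<le> b\<close> \<open>0 < h n\<close>]
      unfolding q_def by (rule ennreal_leI)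
    also have "\<dots> \<le> ennreal (g (b + \<delta>) - g a)"
      using monoD[OF mono, of "b + h n" "b + \<delta>"] h_le[OF that] by (intro ennreal_leI) simp
    finally show ?thesis .
  qed
  have "AE x in lebesgue. liminf (\<lambda>n. u n x) = ennreal (deriv g x) * indicator {a..b} x"
    using mono_AE_differentiable[OF mono]
  proof (rule eventually_mono)
    fix x assume "g differentiable (at x)"
    then have "(\<lambda>n. q n x) \<longlonglongrightarrow> deriv g x"
      using difference_quotients_LIMSEQ_deriv unfolding q_def h_def by simp
    then have "(\<lambda>n. u n x) \<longlonglongrightarrow> ennreal (deriv g x) * indicator {a..b} x"
      unfolding u_def by (cases "x \<in> {a..b}") (auto intro: tendsto_ennrealI)
    then show "liminf (\<lambda>n. u n x) = ennreal (deriv g x) * indicator {a..b} x"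
      by (intro lim_imp_Liminf) auto
  qed
  then have "(\<integral>\<^sup>+ x. ennreal (deriv g x) * indicator {a..b} x \<partial>lebesgue) = (\<integral>\<^sup>+ x. liminf (\<lambda>n. u n x) \<partial>lebesgue)"
    by (intro nn_integral_cong_AE) (simp add: eq_commute)
  also have "\<dots> \<le> liminf (\<lambda>n. integral\<^sup>N lebesgue (u n))"
    using u_meas by (rule nn_integral_liminf)
  also have "\<dots> \<le> ennreal (g (b + \<delta>) - g a)"
    using u_bound by (intro order_trans[OF Liminf_le_Limsup Limsup_bounded]) (auto simp: eventually_sequentially)
  finally show ?thesis .
qed

lemma set_integral_deriv_mono_le:
  fixes g :: "real \<Rightarrow> real"
  assumes mono: "mono g" and "a \<le> b" "0 < \<delta>"
  shows "set_integrable lebesgue {a..b} (deriv g)"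
    and "(LINT x:{a..b}|lebesgue. deriv g x) \<le> g (b + \<delta>) - g a"
proof -
  have meas: "(\<lambda>x. indicator {a..b} x *\<^sub>R deriv g x) \<in> borel_measurable lebesgue"
    using borel_measurable_deriv_mono[OF mono] by (intro borel_measurable_scaleR borel_measurable_indicator) auto
  have nonneg: "AE x in lebesgue. 0 \<le> indicator {a..b} x *\<^sub>R deriv g x"
    using mono_AE_differentiable[OF mono]
    by (rule eventually_mono) (simp add: deriv_nonneg_mono[OF mono])
  have eq: "(\<integral>\<^sup>+ x. ennreal (indicator {a..b} x *\<^sub>R deriv g x) \<partial>lebesgue)
      = (\<integral>\<^sup>+ x. ennreal (deriv g x) * indicator {a..b} x \<partial>lebesgue)"
    by (intro nn_integral_cong) (auto simp: indicator_def)
  have bound: "(\<integral>\<^sup>+ x. ennreal (indicator {a..b} x *\<^sub>R deriv g x) \<partial>lebesgue) \<le> ennreal (g (b + \<delta>) - g a)"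
    unfolding eq using nn_integral_deriv_mono_le[OF assms] .
  then show "set_integrable lebesgue {a..b} (deriv g)"
    unfolding set_integrable_def using meas nonneg
    by (intro integrableI_nonneg) (auto simp: top.not_eq_extremum intro: le_less_trans)
  have "g a \<le> g (b + \<delta>)" using monoD[OF mono] assms by simp
  then show "(LINT x:{a..b}|lebesgue. deriv g x) \<le> g (b + \<delta>) - g a"
    unfolding set_lebesgue_integral_def integral_eq_nn_integral[OF meas nonneg]
    using bound by (intro enn2real_leI) auto
qed

lemma set_integral_deriv_mono_lipschitz:
  fixes g :: "real \<Rightarrow> real"
  assumes mono: "mono g" and lip: "\<And>x y. \<bar>g x - g y\<bar> \<le> L * \<bar>x - y\<bar>" and "a \<le> b"
  shows "set_integrable lebesgue {a..b} (deriv g)"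
    and "(LINT x:{a..b}|lebesgue. deriv g x) = g b - g a"
proof -
  define I where "I = (LINT x:{a..b}|lebesgue. deriv g x)"
  \<comment> \<open>\<open>L x - g x\<close> is monotone as well, which gives the matching lower bound\<close>
  define h where "h = (\<lambda>x. L * x - g x)"
  have "0 \<le> L" using lip[of 0 1] by simp
  have g_up: "g y - g x \<le> L * (y - x)" if "x \<le> y" for x y using lip[of y x] that by simp
  have mono_h: "mono h" unfolding h_def mono_def using g_up by (simp add: algebra_simps)
  show int_g: "set_integrable lebesgue {a..b} (deriv g)"
    using set_integral_deriv_mono_le(1)[OF mono \<open>a \<le> b\<close>, of 1] by simp
  have "AE x in lebesgue. deriv h x = L - deriv g x"
    using mono_AE_differentiable[OF mono]
  proof (rule eventually_mono)
    fix x assume "g differentiable (at x)"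
    then have "DERIV h x :> L - deriv g x"
      unfolding h_def by (auto intro!: derivative_eq_intros simp: DERIV_deriv_iff_real_differentiable)
    then show "deriv h x = L - deriv g x" by (rule DERIV_imp_deriv)
  qed
  then have "(LINT x:{a..b}|lebesgue. deriv h x) = (LINT x:{a..b}|lebesgue. L - deriv g x)"
    using borel_measurable_deriv_mono[OF mono_h] borel_measurable_deriv_mono[OF mono]
    by (intro set_lebesgue_integral_cong_AE) (auto elim: eventually_mono)
  also have "\<dots> = L * (b - a) - I"
    using int_g \<open>a \<le> b\<close> unfolding I_def
    by (subst set_integral_diff(2)) (auto simp: set_integrable_def integrable_indicator_iff set_integral_const)
  finally have I_h: "(LINT x:{a..b}|lebesgue. deriv h x) = L * (b - a) - I" .
  have close: "\<bar>I - (g b - g a)\<bar> \<le> L * \<delta>" if "0 < \<delta>" for \<delta>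
    using set_integral_deriv_mono_le(2)[OF mono \<open>a \<le> b\<close> that]
      set_integral_deriv_mono_le(2)[OF mono_h \<open>a \<le> b\<close> that, unfolded I_h]
      g_up[of b "b + \<delta>"] monoD[OF mono, of b "b + \<delta>"] that
    unfolding I_def[symmetric] by (simp add: h_def algebra_simps abs_le_iff)
  have "\<bar>I - (g b - g a)\<bar> \<le> 0"
  proof (rule field_le_epsilon)
    fix e :: real assume "0 < e"
    have "\<bar>I - (g b - g a)\<bar> \<le> L * (e / (L + 1))"
      using close[of "e / (L + 1)"] \<open>0 < e\<close> \<open>0 \<le> L\<close> by simp
    also have "\<dots> \<le> e" using \<open>0 < e\<close> \<open>0 \<le> L\<close> by (simp add: field_simps)
    finally show "\<bar>I - (g b - g a)\<bar> \<le> 0 + e" by simp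
  qed
  then show "(LINT x:{a..b}|lebesgue. deriv g x) = g b - g a" unfolding I_def by simp
qed

lemma set_integral_deriv_mono_nonneg:
  fixes g :: "real \<Rightarrow> real"
  assumes "mono g"
  shows "0 \<le> (LINT x:A|lebesgue. deriv g x)"
  unfolding set_lebesgue_integral_def using mono_AE_differentiable[OF assms]
  by (intro integral_nonneg_AE) (auto elim!: eventually_mono intro: mult_nonneg_nonneg deriv_nonneg_mono[OF assms])

lemma set_integral_deriv_mono_approx:
  fixes P :: "real \<Rightarrow> real" and P' R :: "nat \<Rightarrow> real \<Rightarrow> real"
  assumes "a \<le> b" and split: "\<And>n x. P x = P' n x + R n x"
    and mono_P': "\<And>n. mono (P' n)" and lip: "\<And>n x y. \<bar>P' n x - P' n y\<bar> \<le> L n * \<bar>x - y\<bar>"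
    and mono_R: "\<And>n. mono (R n)" and small: "(\<lambda>n. R n (b + 1) - R n a) \<longlonglongrightarrow> 0"
  shows "(LINT x:{a..b}|lebesgue. deriv P x) = P b - P a"
proof -
  define I where "I = (LINT x:{a..b}|lebesgue. deriv P x)"
  have "mono P"
  proof (rule monoI)
    fix x y :: real assume "x \<le> y"
    then show "P x \<le> P y"
      using monoD[OF mono_P' \<open>x \<le> y\<close>, of 0] monoD[OF mono_R \<open>x \<le> y\<close>, of 0] split[where n = 0]
      by simp
  qed
  have close: "\<bar>I - (P b - P a)\<bar> \<le> R n (b + 1) - R n a" for n
  proof -
    have "AE x in lebesgue. deriv P x = deriv (P' n) x + deriv (R n) x"
      using mono_AE_differentiable[OF mono_P'[of n]] mono_AE_differentiable[OF mono_R[of n]]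
    proof eventually_elim
      case (elim x)
      then have "DERIV (\<lambda>x. P' n x + R n x) x :> deriv (P' n) x + deriv (R n) x"
        by (intro DERIV_add) (auto simp: DERIV_deriv_iff_real_differentiable)
      then show ?case unfolding split[symmetric, abs_def] by (rule DERIV_imp_deriv)
    qed
    then have "I = (LINT x:{a..b}|lebesgue. deriv (P' n) x + deriv (R n) x)"
      unfolding I_def using borel_measurable_deriv_mono[OF \<open>mono P\<close>]
        borel_measurable_deriv_mono[OF mono_P'] borel_measurable_deriv_mono[OF mono_R]
      by (intro set_lebesgue_integral_cong_AE) (auto elim: eventually_mono)
    also have "\<dots> = P' n b - P' n a + (LINT x:{a..b}|lebesgue. deriv (R n) x)"
      using set_integral_deriv_mono_lipschitz[OF mono_P' lip \<open>a \<le> b\<close>]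
        set_integral_deriv_mono_le(1)[OF mono_R \<open>a \<le> b\<close>, of 1]
      by (simp add: set_integral_add)
    finally have "I = P' n b - P' n a + (LINT x:{a..b}|lebesgue. deriv (R n) x)" .
    moreover have "(LINT x:{a..b}|lebesgue. deriv (R n) x) \<le> R n (b + 1) - R n a"
      using set_integral_deriv_mono_le(2)[OF mono_R \<open>a \<le> b\<close>, of 1] by simp
    moreover have "R n a \<le> R n b" "R n b \<le> R n (b + 1)"
      using monoD[OF mono_R] \<open>a \<le> b\<close> by auto
    ultimately show ?thesis
      using set_integral_deriv_mono_nonneg[OF mono_R[of n], of "{a..b}"] split[of a n] split[of b n]
      by (simp add: abs_le_iff)
  qed
  have "\<bar>I - (P b - P a)\<bar> \<le> 0"
    by (rule LIMSEQ_le_const[OF small]) (use close in auto)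
  then show ?thesis unfolding I_def by simp
qed

lemma set_integral_Ici_LIMSEQ_nonneg:
  fixes f :: "real \<Rightarrow> real"
  assumes meas: "f \<in> borel_measurable lebesgue" and nonneg: "AE x in lebesgue. 0 \<le> x \<longrightarrow> 0 \<le> f x"
    and int: "\<And>n. set_integrable lebesgue {0..real n} f"
    and lim: "(\<lambda>n. LINT x:{0..real n}|lebesgue. f x) \<longlonglongrightarrow> I"
  shows "set_integrable lebesgue {0..} f" "(LINT x:{0..}|lebesgue. f x) = I"
proof -
  define u where "u = (\<lambda>n x. indicator {0..real n} x *\<^sub>R f x)"
  have u_int: "integrable lebesgue (u n)" for n
    using int unfolding u_def set_integrable_def .
  have u_mono: "AE x in lebesgue. incseq (\<lambda>n. u n x)"
    using nonneg by (rule eventually_mono) (auto simp: u_def incseq_def indicator_def)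
  have u_nonneg: "AE x in lebesgue. 0 \<le> u n x" for n
    using nonneg by (rule eventually_mono) (auto simp: u_def indicator_def)
  have u_lim: "AE x in lebesgue. (\<lambda>n. u n x) \<longlonglongrightarrow> indicator {0..} x *\<^sub>R f x"
  proof (rule always_eventually, rule allI, rule tendsto_eventually)
    fix x :: real
    obtain N :: nat where N: "x \<le> real N" using real_arch_simple by blast
    have "u n x = indicator {0..} x *\<^sub>R f x" if "N \<le> n" for n
      using order_trans[OF N of_nat_mono[OF that]] by (simp add: u_def indicator_def)
    then show "\<forall>\<^sub>F n in sequentially. u n x = indicator {0..} x *\<^sub>R f x"
      unfolding eventually_sequentially by blast
  qed
  have int_lim: "(\<lambda>n. integral\<^sup>L lebesgue (u n)) \<longlonglongrightarrow> I"
    using lim unfolding u_def set_lebesgue_integral_def .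
  have "(\<lambda>x. indicator {0..} x *\<^sub>R f x) \<in> borel_measurable lebesgue"
    using meas by (intro borel_measurable_scaleR borel_measurable_indicator) auto
  then have "integrable lebesgue (\<lambda>x. indicator {0..} x *\<^sub>R f x)"
    "integral\<^sup>L lebesgue (\<lambda>x. indicator {0..} x *\<^sub>R f x) = I"
    by (rule integral_monotone_convergence_nonneg[OF u_int u_mono u_nonneg u_lim int_lim])+
  then show "set_integrable lebesgue {0..} f" "(LINT x:{0..}|lebesgue. f x) = I"
    unfolding set_integrable_def set_lebesgue_integral_def by auto
qed

lemma AE_lebesgue_real_neq: "AE x in lebesgue. x \<noteq> (c::real)"
  using negligible_sing[of c] by (intro AE_I'[of "{c}"]) (auto simp: negligible_iff_null_sets)

lemma AE_eq_const_if_set_integral_eq: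
  fixes k :: "'a \<Rightarrow> real"
  assumes "set_integrable M A k" "A \<in> sets M" "emeasure M A < \<infinity>"
    and le: "AE x\<in>A in M. k x \<le> c" and eq: "(LINT x:A|M. k x) = c * measure M A"
  shows "AE x\<in>A in M. k x = c"
proof -
  have const: "set_integrable M A (\<lambda>x. c)" "(LINT x:A|M. c) = c * measure M A"
    using assms(2,3) by (auto simp: set_integrable_def integrable_indicator_iff set_integral_const
      emeasure_eq_measure2 ennreal_less_top)
  then have "(LINT x:A|M. c - k x) = 0"
    using set_integral_diff(2)[OF const(1) assms(1)] eq by simp
  moreover have "AE x in M. 0 \<le> indicator A x *\<^sub>R (c - k x)"
    using le by (rule eventually_mono) (auto simp: indicator_def)
  moreover have "integrable M (\<lambda>x. indicator A x *\<^sub>R (c - k x))"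
    using set_integral_diff(1)[OF const(1) assms(1)] unfolding set_integrable_def .
  ultimately have "AE x in M. indicator A x *\<^sub>R (c - k x) = 0"
    unfolding set_lebesgue_integral_def using integral_nonneg_eq_0_iff_AE by blast
  then show ?thesis by (rule eventually_mono) (auto simp: indicator_def)
qed

section \<open>Subdistribution functions\<close>

lemma subdistribution_nonneg:
  assumes "subdistribution F" "0 \<le> x" "0 \<le> y"
  shows "0 \<le> F x y"
  using assms(1)[unfolded subdistribution_def, THEN conjunct1, rule_format, OF assms(2,3)] .

lemma subdistribution_2_increasing:
  assumes "subdistribution F" "0 \<le> x" "x \<le> x'" "0 \<le> y" "y \<le> y'"
  shows "F x y' + F x' y \<le> F x' y' + F x y"
  using assms(1)[unfolded subdistribution_def, THEN conjunct2, THEN conjunct1, rule_format, OF assms(2-5)]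
  by simp

lemma subdistribution_le_min:
  assumes "subdistribution F" "0 \<le> x" "0 \<le> y"
  shows "F x y \<le> min x y"
  using assms(1)[unfolded subdistribution_def, THEN conjunct2, THEN conjunct2, THEN conjunct1, rule_format,
    OF assms(2,3)] .

lemma subdistribution_lipschitz:
  assumes "subdistribution F" "0 \<le> x" "0 \<le> y" "0 \<le> x'" "0 \<le> y'"
  shows "\<bar>F x y - F x' y'\<bar> \<le> \<bar>x - x'\<bar> + \<bar>y - y'\<bar>"
  using assms(1)[unfolded subdistribution_def, THEN conjunct2, THEN conjunct2, THEN conjunct2, rule_format,
    OF assms(2-5)] .

lemma subdistribution_transpose:
  assumes "subdistribution F"
  shows "subdistribution (\<lambda>x y. F y x)"
  unfolding subdistribution_def
proof (intro conjI allI impI)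
  fix x1 x2 y1 y2 :: real assume "0 \<le> x1" "x1 \<le> x2" "0 \<le> y1" "y1 \<le> y2"
  then show "0 \<le> F y2 x2 - F y2 x1 - F y1 x2 + F y1 x1"
    using subdistribution_2_increasing[OF assms, of y1 y2 x1 x2] by simp
next
  fix x y x' y' :: real assume "0 \<le> x" "0 \<le> y" "0 \<le> x'" "0 \<le> y'"
  then show "\<bar>F y x - F y' x'\<bar> \<le> \<bar>x - x'\<bar> + \<bar>y - y'\<bar>"
    using subdistribution_lipschitz[OF assms, of y x y' x'] by simp
qed (use subdistribution_nonneg[OF assms] subdistribution_le_min[OF assms] in \<open>auto simp: min.commute\<close>)

text \<open>Clamping both arguments to \<open>[0, \<infinity>)\<close> extends \<open>F\<close> from the quadrant to the plane, so
  that one-variable results for functions on \<open>\<real>\<close> apply to its sections.\<close>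

definition quadrant_ext :: "(real \<Rightarrow> real \<Rightarrow> real) \<Rightarrow> real \<Rightarrow> real \<Rightarrow> real" where
  "quadrant_ext F x y = F (max 0 x) (max 0 y)"

context
  fixes F :: "real \<Rightarrow> real \<Rightarrow> real"
  assumes F: "subdistribution F"
begin

lemma quadrant_ext_eq_0:
  assumes "x \<le> 0 \<or> y \<le> 0"
  shows "quadrant_ext F x y = 0"
proof -
  have "min (max 0 x) (max 0 y) = 0" using assms by linarith
  then show ?thesis
    using subdistribution_nonneg[OF F, of "max 0 x" "max 0 y"] subdistribution_le_min[OF F, of "max 0 x" "max 0 y"]
    unfolding quadrant_ext_def by simp
qed

lemma quadrant_ext_le: "quadrant_ext F x y \<le> max 0 x"
  using subdistribution_le_min[OF F, of "max 0 x" "max 0 y"] unfolding quadrant_ext_def by simp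

lemma quadrant_ext_2_increasing:
  assumes "x \<le> x'"
  shows "mono (\<lambda>y. quadrant_ext F x' y - quadrant_ext F x y)"
proof (rule monoI)
  fix y y' :: real assume "y \<le> y'"
  then have "max 0 x \<le> max 0 x'" "max 0 y \<le> max 0 y'" using assms by auto
  from subdistribution_2_increasing[OF F _ this(1) _ this(2)]
  show "quadrant_ext F x' y - quadrant_ext F x y \<le> quadrant_ext F x' y' - quadrant_ext F x y'"
    unfolding quadrant_ext_def by simp
qed

lemma mono_quadrant_ext: "mono (quadrant_ext F x)"
proof -
  have "quadrant_ext F 0 y = 0" for y by (rule quadrant_ext_eq_0) simp
  then have "quadrant_ext F x = (\<lambda>y. quadrant_ext F (max 0 x) y - quadrant_ext F 0 y)"
    by (simp add: quadrant_ext_def fun_eq_iff)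
  then show ?thesis using quadrant_ext_2_increasing[of 0 "max 0 x"] by simp
qed

lemma mono_quadrant_ext_left: "mono (\<lambda>x. quadrant_ext F x y)"
proof (rule monoI)
  fix x x' :: real assume "x \<le> x'"
  then show "quadrant_ext F x y \<le> quadrant_ext F x' y"
    using monoD[OF quadrant_ext_2_increasing[OF \<open>x \<le> x'\<close>], of "min 0 y" y]
      quadrant_ext_eq_0[of x "min 0 y"] quadrant_ext_eq_0[of x' "min 0 y"] by simp
qed

lemma quadrant_ext_lipschitz:
  "\<bar>quadrant_ext F x y - quadrant_ext F x' y'\<bar> \<le> \<bar>x - x'\<bar> + \<bar>y - y'\<bar>"
proof -
  have "\<bar>max 0 x - max 0 x'\<bar> \<le> \<bar>x - x'\<bar>" "\<bar>max 0 y - max 0 y'\<bar> \<le> \<bar>y - y'\<bar>"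
    unfolding max_def by (simp_all add: abs_le_iff) linarith+
  moreover have "\<bar>F (max 0 x) (max 0 y) - F (max 0 x') (max 0 y')\<bar>
      \<le> \<bar>max 0 x - max 0 x'\<bar> + \<bar>max 0 y - max 0 y'\<bar>"
    by (rule subdistribution_lipschitz[OF F]) auto
  ultimately show ?thesis unfolding quadrant_ext_def by linarith
qed

end

definition partial2 :: "(real \<Rightarrow> real \<Rightarrow> real) \<Rightarrow> real \<Rightarrow> real \<Rightarrow> real" where
  "partial2 F x = deriv (quadrant_ext F x)"

definition margin :: "(real \<Rightarrow> real \<Rightarrow> real) \<Rightarrow> real \<Rightarrow> real" where
  "margin F x = (LINT t:{0..}|lebesgue. partial2 F x t)"

context
  fixes F :: "real \<Rightarrow> real \<Rightarrow> real"
  assumes F: "subdistribution F"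
begin

lemma partial2_eq_deriv:
  assumes "0 \<le> x" "0 < t"
  shows "deriv (\<lambda>s. F x s) t = partial2 F x t"
  unfolding partial2_def
proof (rule deriv_cong_ev)
  show "\<forall>\<^sub>F s in nhds t. F x s = quadrant_ext F x s"
    using eventually_nhds_in_open[of "{0<..}" t] assms by (auto simp: quadrant_ext_def elim!: eventually_mono)
qed simp

lemma partial2_eq_0:
  assumes "x \<le> 0"
  shows "partial2 F x t = 0"
proof -
  have "quadrant_ext F x = (\<lambda>_. 0)" using quadrant_ext_eq_0[OF F] assms by (simp add: fun_eq_iff)
  then show ?thesis unfolding partial2_def by (metis DERIV_const DERIV_imp_deriv)
qed

lemma borel_measurable_partial2: "partial2 F x \<in> borel_measurable lebesgue"
  unfolding partial2_def by (rule borel_measurable_deriv_mono[OF mono_quadrant_ext[OF F]])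

lemma partial2_AE_bounds: "AE t in lebesgue. 0 \<le> partial2 F x t \<and> partial2 F x t \<le> 1"
  using mono_AE_differentiable[OF mono_quadrant_ext[OF F]]
proof (rule eventually_mono)
  fix t assume diff: "quadrant_ext F x differentiable (at t)"
  have "\<bar>quadrant_ext F x s - quadrant_ext F x s'\<bar> \<le> 1 * \<bar>s - s'\<bar>" for s s'
    using quadrant_ext_lipschitz[OF F, of x s x s'] by simp
  from abs_deriv_le_lipschitz[OF this diff] deriv_nonneg_mono[OF mono_quadrant_ext[OF F] diff]
  show "0 \<le> partial2 F x t \<and> partial2 F x t \<le> 1"
    unfolding partial2_def by simp
qed

lemma partial2_AE_mono:
  assumes "x \<le> x'"
  shows "AE t in lebesgue. partial2 F x t \<le> partial2 F x' t"
  using mono_AE_differentiable[OF mono_quadrant_ext[OF F, of x]] mono_AE_differentiable[OF mono_quadrant_ext[OF F, of x']]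
proof eventually_elim
  case (elim t)
  then have "DERIV (\<lambda>y. quadrant_ext F x' y - quadrant_ext F x y) t :> partial2 F x' t - partial2 F x t"
    unfolding partial2_def by (intro DERIV_diff) (auto simp: DERIV_deriv_iff_real_differentiable)
  then have "deriv (\<lambda>y. quadrant_ext F x' y - quadrant_ext F x y) t = partial2 F x' t - partial2 F x t"
    "(\<lambda>y. quadrant_ext F x' y - quadrant_ext F x y) differentiable (at t)"
    by (auto simp: DERIV_imp_deriv real_differentiable_def)
  then show ?case using deriv_nonneg_mono[OF quadrant_ext_2_increasing[OF F assms], of t] by simp
qed

lemma set_integral_partial2_Icc:
  assumes "0 \<le> T"
  shows "set_integrable lebesgue {0..T} (partial2 F x)"
    and "(LINT t:{0..T}|lebesgue. partial2 F x t) = quadrant_ext F x T"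
proof -
  have lip: "\<bar>quadrant_ext F x s - quadrant_ext F x s'\<bar> \<le> 1 * \<bar>s - s'\<bar>" for s s'
    using quadrant_ext_lipschitz[OF F, of x s x s'] by simp
  show "set_integrable lebesgue {0..T} (partial2 F x)"
    unfolding partial2_def using set_integral_deriv_mono_lipschitz(1)[OF mono_quadrant_ext[OF F] lip assms] .
  show "(LINT t:{0..T}|lebesgue. partial2 F x t) = quadrant_ext F x T"
    unfolding partial2_def using set_integral_deriv_mono_lipschitz(2)[OF mono_quadrant_ext[OF F] lip assms]
      quadrant_ext_eq_0[OF F, of x 0] by simp
qed

lemma LIMSEQ_margin: "(\<lambda>n. quadrant_ext F x (real n)) \<longlonglongrightarrow> margin F x"
  and set_integrable_partial2: "set_integrable lebesgue {0..} (partial2 F x)"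
proof -
  have "incseq (\<lambda>n. quadrant_ext F x (real n))"
    using mono_quadrant_ext[OF F] by (auto simp: incseq_def monoD)
  moreover have "bdd_above (range (\<lambda>n. quadrant_ext F x (real n)))"
    using quadrant_ext_le[OF F] by (intro bdd_aboveI[of _ "max 0 x"]) auto
  ultimately have lim: "(\<lambda>n. quadrant_ext F x (real n)) \<longlonglongrightarrow> (SUP n. quadrant_ext F x (real n))"
    by (rule LIMSEQ_incseq_SUP[rotated])
  have nonneg: "AE t in lebesgue. 0 \<le> t \<longrightarrow> 0 \<le> partial2 F x t"
    using partial2_AE_bounds[of x] by (rule eventually_mono) simp
  have "(\<lambda>n. LINT t:{0..real n}|lebesgue. partial2 F x t) \<longlonglongrightarrow> (SUP n. quadrant_ext F x (real n))"
    using lim by (simp add: set_integral_partial2_Icc)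
  note set_integral_Ici_LIMSEQ_nonneg[OF borel_measurable_partial2 nonneg set_integral_partial2_Icc(1) this]
  then show "set_integrable lebesgue {0..} (partial2 F x)" "(\<lambda>n. quadrant_ext F x (real n)) \<longlonglongrightarrow> margin F x"
    using lim unfolding margin_def by auto
qed

lemma mono_margin: "mono (margin F)"
proof (rule monoI)
  fix x x' :: real assume "x \<le> x'"
  then show "margin F x \<le> margin F x'"
    using monoD[OF mono_quadrant_ext_left[OF F] \<open>x \<le> x'\<close>] by (intro LIMSEQ_le[OF LIMSEQ_margin LIMSEQ_margin]) auto
qed

lemma margin_lipschitz: "\<bar>margin F x - margin F x'\<bar> \<le> \<bar>x - x'\<bar>"
proof (rule LIMSEQ_le_const2[OF tendsto_rabs[OF tendsto_diff[OF LIMSEQ_margin LIMSEQ_margin]]])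
  show "\<exists>N. \<forall>n\<ge>N. \<bar>quadrant_ext F x (real n) - quadrant_ext F x' (real n)\<bar> \<le> \<bar>x - x'\<bar>"
  proof (intro exI allI impI)
    fix n :: nat
    show "\<bar>quadrant_ext F x (real n) - quadrant_ext F x' (real n)\<bar> \<le> \<bar>x - x'\<bar>"
      using quadrant_ext_lipschitz[OF F, of x "real n" x' "real n"] by simp
  qed
qed

lemma margin_eq_0:
  assumes "x \<le> 0"
  shows "margin F x = 0"
proof -
  have "partial2 F x = (\<lambda>_. 0)" using partial2_eq_0 assms by (simp add: fun_eq_iff)
  then show ?thesis by (simp add: margin_def)
qed

lemma tendsto_margin:
  assumes "0 \<le> x"
  shows "((\<lambda>t. F x t) \<longlongrightarrow> margin F x) at_top"
proof -
  have "(quadrant_ext F x \<longlongrightarrow> margin F x) at_top"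
    using mono_quadrant_ext[OF F] LIMSEQ_margin by (rule tendsto_at_topI_sequentially_real)
  moreover have "\<forall>\<^sub>F t in at_top. quadrant_ext F x t = F x t"
    using eventually_ge_at_top[of "0::real"] by eventually_elim (simp add: quadrant_ext_def assms)
  ultimately show ?thesis by (rule Lim_transform_eventually)
qed

lemma margin_eq_id_iff:
  "(\<forall>w\<ge>0. ((\<lambda>t. F w t) \<longlongrightarrow> w) at_top) \<longleftrightarrow> (\<forall>w\<ge>0. margin F w = w)"
  using tendsto_margin tendsto_unique[OF trivial_limit_at_top_linorder] by metis

end

lemma set_integrable_min_const:
  fixes f :: "'a \<Rightarrow> real"
  assumes f: "set_integrable M A f" and "A \<in> sets M" "\<And>x. 0 \<le> f x" "0 \<le> c"
  shows "set_integrable M A (\<lambda>x. min (f x) c)"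
proof (rule set_integrable_bound[OF f])
  have "(\<lambda>x. indicator A x *\<^sub>R min (f x) c) = (\<lambda>x. min (indicator A x *\<^sub>R f x) (indicator A x *\<^sub>R c))"
    using assms(3,4) by (auto simp: indicator_def fun_eq_iff)
  then show "set_borel_measurable M A (\<lambda>x. min (f x) c)"
    unfolding set_borel_measurable_def using f assms(2) unfolding set_integrable_def
    by (simp add: borel_measurable_integrable borel_measurable_min borel_measurable_scaleR borel_measurable_indicator)
  show "AE x in M. x \<in> A \<longrightarrow> norm (min (f x) c) \<le> norm (f x)"
    using assms(3,4) by (auto simp: min_def)
qed

lemma LIMSEQ_set_integral_truncation:
  fixes f :: "'a \<Rightarrow> real"
  assumes f: "set_integrable M A f" and "A \<in> sets M" "\<And>x. 0 \<le> f x"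
  shows "(\<lambda>n. LINT x:A|M. f x - min (f x) (real n)) \<longlonglongrightarrow> 0"
proof -
  have int: "set_integrable M A (\<lambda>x. f x - min (f x) (real n))" for n
    using f set_integrable_min_const[OF assms, of "real n"] by (intro set_integral_diff(1)) auto
  have "(\<lambda>n. LINT x|M. indicator A x *\<^sub>R (f x - min (f x) (real n))) \<longlonglongrightarrow> (LINT x|M. 0)"
  proof (rule integral_dominated_convergence[where w = "\<lambda>x. indicator A x *\<^sub>R f x"])
    show "(\<lambda>x. indicator A x *\<^sub>R (f x - min (f x) (real n))) \<in> borel_measurable M" for n
      using int[of n] unfolding set_integrable_def by (rule borel_measurable_integrable)
    show "integrable M (\<lambda>x. indicator A x *\<^sub>R f x)" using f unfolding set_integrable_def .
    show "AE x in M. (\<lambda>n. indicator A x *\<^sub>R (f x - min (f x) (real n))) \<longlonglongrightarrow> 0"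
    proof (rule always_eventually, rule allI, rule tendsto_eventually)
      fix x
      obtain N :: nat where N: "f x \<le> real N" using real_arch_simple by blast
      have "indicator A x *\<^sub>R (f x - min (f x) (real n)) = 0" if "N \<le> n" for n
        using order_trans[OF N of_nat_mono[OF that]] by simp
      then show "\<forall>\<^sub>F n in sequentially. indicator A x *\<^sub>R (f x - min (f x) (real n)) = 0"
        unfolding eventually_sequentially by blast
    qed
    show "AE x in M. norm (indicator A x *\<^sub>R (f x - min (f x) (real n))) \<le> indicator A x *\<^sub>R f x" for n
      using assms(3) by (auto simp: indicator_def min_def)
  qed simp
  then show ?thesis unfolding set_lebesgue_integral_def by simp
qed

section \<open>The operator \<open>T\<^sub>F\<close>\<close>

definition TF_primitive :: "(real \<Rightarrow> real \<Rightarrow> real) \<Rightarrow> (real \<Rightarrow> real) \<Rightarrow> real \<Rightarrow> real" where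
  "TF_primitive F f x = (LINT t:{0..}|lebesgue. partial2 F x t * f t)"

context
  fixes F :: "real \<Rightarrow> real \<Rightarrow> real"
  assumes F: "subdistribution F"
begin

lemma set_borel_measurable_partial2_mult:
  assumes "set_borel_measurable lebesgue {0..} f"
  shows "set_borel_measurable lebesgue {0..} (\<lambda>t. partial2 F x t * f t)"
proof -
  have "(\<lambda>t. partial2 F x t * (indicator {0..} t *\<^sub>R f t)) \<in> borel_measurable lebesgue"
    using borel_measurable_partial2[OF F] assms unfolding set_borel_measurable_def
    by (rule borel_measurable_times)
  then show ?thesis unfolding set_borel_measurable_def by (simp add: mult.left_commute)
qed

lemma set_integrable_partial2_mult:
  assumes f: "set_integrable lebesgue {0..} f"
  shows "set_integrable lebesgue {0..} (\<lambda>t. partial2 F x t * f t)"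
proof (rule set_integrable_bound[OF f])
  show "set_borel_measurable lebesgue {0..} (\<lambda>t. partial2 F x t * f t)"
    using f by (intro set_borel_measurable_partial2_mult) (simp add: set_integrable_def set_borel_measurable_def)
  show "AE t in lebesgue. t \<in> {0..} \<longrightarrow> norm (partial2 F x t * f t) \<le> norm (f t)"
    using partial2_AE_bounds[OF F, of x]
    by (rule eventually_mono) (auto simp: abs_mult intro: mult_left_le_one_le)
qed

lemma TF_eq_deriv_TF_primitive:
  assumes f: "set_borel_measurable lebesgue {0..} f" and "0 < x"
  shows "TF F f x = deriv (TF_primitive F f) x"
  unfolding TF_def
proof (rule deriv_cong_ev)
  have "(LINT t:{0..}|lebesgue. deriv (\<lambda>s. F y s) t * f t) = TF_primitive F f y" if "0 < y" for y
  proof -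
    have ae: "AE t in lebesgue.
        indicator {0..} t *\<^sub>R (deriv (\<lambda>s. F y s) t * f t) = indicator {0..} t *\<^sub>R (partial2 F y t * f t)"
      using AE_lebesgue_real_neq[of 0]
    proof (rule eventually_mono)
      fix t :: real assume "t \<noteq> 0"
      then show "indicator {0..} t *\<^sub>R (deriv (\<lambda>s. F y s) t * f t) = indicator {0..} t *\<^sub>R (partial2 F y t * f t)"
        using partial2_eq_deriv[OF F, of y t] that by (cases "0 < t") auto
    qed
    have meas: "(\<lambda>t. indicator {0..} t *\<^sub>R (partial2 F y t * f t)) \<in> borel_measurable lebesgue"
      using set_borel_measurable_partial2_mult[OF f] unfolding set_borel_measurable_def .
    show ?thesis
      unfolding TF_primitive_def set_lebesgue_integral_def
      using borel_measurable_AE[OF meas AE_symmetric[OF ae]] meas ae by (rule integral_cong_AE)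
  qed
  then show "\<forall>\<^sub>F y in nhds x. (\<lambda>y. LINT t:{0..}|lebesgue. deriv (\<lambda>s. F y s) t * f t) y = TF_primitive F f y"
    using eventually_nhds_in_open[of "{0<..}" x] \<open>0 < x\<close> by (auto elim!: eventually_mono)
qed simp

lemma TF_AE_eq_deriv_TF_primitive:
  assumes "set_borel_measurable lebesgue {0..} f"
  shows "AE x in lebesgue. 0 \<le> x \<longrightarrow> TF F f x = deriv (TF_primitive F f) x"
  using AE_lebesgue_real_neq[of 0]
  by (rule eventually_mono) (simp add: TF_eq_deriv_TF_primitive[OF assms])

lemma TF_primitive_indicator: "TF_primitive F (indicator {0..}) = margin F"
  unfolding TF_primitive_def margin_def by (intro ext set_lebesgue_integral_cong) auto

lemma TF_primitive_eq_0: "x \<le> 0 \<Longrightarrow> TF_primitive F f x = 0"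
  unfolding TF_primitive_def by (simp add: partial2_eq_0[OF F])

lemma TF_primitive_add:
  assumes "set_integrable lebesgue {0..} f" "set_integrable lebesgue {0..} g"
  shows "TF_primitive F (\<lambda>t. f t + g t) x = TF_primitive F f x + TF_primitive F g x"
  unfolding TF_primitive_def distrib_left
  using assms by (intro set_integral_add(2) set_integrable_partial2_mult)

lemma TF_primitive_diff:
  assumes "set_integrable lebesgue {0..} f" "set_integrable lebesgue {0..} g"
  shows "TF_primitive F (\<lambda>t. f t - g t) x = TF_primitive F f x - TF_primitive F g x"
  unfolding TF_primitive_def right_diff_distrib
  using assms by (intro set_integral_diff(2) set_integrable_partial2_mult)

context
  fixes f :: "real \<Rightarrow> real"
  assumes f: "set_integrable lebesgue {0..} f" and f_nonneg: "\<And>t. 0 \<le> f t"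
begin

lemma TF_primitive_nonneg: "0 \<le> TF_primitive F f x"
proof -
  have "AE t in lebesgue. 0 \<le> indicator {0..} t *\<^sub>R (partial2 F x t * f t)"
    using partial2_AE_bounds[OF F, of x] by (rule eventually_mono) (simp add: f_nonneg)
  then show ?thesis unfolding TF_primitive_def set_lebesgue_integral_def by (rule integral_nonneg_AE)
qed

lemma TF_primitive_le_integral: "TF_primitive F f x \<le> (LINT t:{0..}|lebesgue. f t)"
proof -
  have "AE t\<in>{0..} in lebesgue. partial2 F x t * f t \<le> f t"
    using partial2_AE_bounds[OF F, of x] by (rule eventually_mono) (simp add: mult_left_le_one_le f_nonneg)
  then show ?thesis
    unfolding TF_primitive_def by (intro set_integral_mono_AE set_integrable_partial2_mult f)
qed

lemma mono_TF_primitive: "mono (TF_primitive F f)"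
proof (rule monoI)
  fix x x' :: real assume "x \<le> x'"
  then show "TF_primitive F f x \<le> TF_primitive F f x'"
    unfolding TF_primitive_def using partial2_AE_mono[OF F \<open>x \<le> x'\<close>] f_nonneg
    by (intro set_integral_mono_AE set_integrable_partial2_mult f)
      (auto elim!: eventually_mono intro: mult_right_mono)
qed

lemma TF_primitive_lipschitz:
  assumes "\<And>t. f t \<le> M"
  shows "\<bar>TF_primitive F f x - TF_primitive F f x'\<bar> \<le> M * \<bar>x - x'\<bar>"
proof -
  have up: "TF_primitive F f x' - TF_primitive F f x \<le> M * (x' - x)" if "x \<le> x'" for x x'
  proof -
    have int: "set_integrable lebesgue {0..} (partial2 F x)" "set_integrable lebesgue {0..} (partial2 F x')"
      using set_integrable_partial2[OF F] by auto
    have "TF_primitive F f x' - TF_primitive F f x = (LINT t:{0..}|lebesgue. partial2 F x' t * f t - partial2 F x t * f t)"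
      unfolding TF_primitive_def by (intro set_integral_diff(2)[symmetric] set_integrable_partial2_mult f)
    also have "\<dots> \<le> (LINT t:{0..}|lebesgue. M * (partial2 F x' t - partial2 F x t))"
    proof (rule set_integral_mono_AE)
      show "set_integrable lebesgue {0..} (\<lambda>t. partial2 F x' t * f t - partial2 F x t * f t)"
        by (intro set_integral_diff(1) set_integrable_partial2_mult f)
      show "set_integrable lebesgue {0..} (\<lambda>t. M * (partial2 F x' t - partial2 F x t))"
        using int by (intro set_integrable_mult_right set_integral_diff(1))
      show "AE t\<in>{0..} in lebesgue. partial2 F x' t * f t - partial2 F x t * f t \<le> M * (partial2 F x' t - partial2 F x t)"
        using partial2_AE_mono[OF F that]
      proof (rule eventually_mono)
        fix t assume "partial2 F x t \<le> partial2 F x' t"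
        then have "(partial2 F x' t - partial2 F x t) * f t \<le> (partial2 F x' t - partial2 F x t) * M"
          by (intro mult_left_mono assms) simp
        then show "t \<in> {0..} \<longrightarrow> partial2 F x' t * f t - partial2 F x t * f t \<le> M * (partial2 F x' t - partial2 F x t)"
          by (simp add: algebra_simps)
      qed
    qed
    also have "\<dots> = M * (margin F x' - margin F x)"
      unfolding margin_def using int by (simp add: set_integral_diff)
    also have "\<dots> \<le> M * (x' - x)"
      using margin_lipschitz[OF F, of x' x] that f_nonneg[of 0] assms[of 0] by (intro mult_left_mono) auto
    finally show ?thesis .
  qed
  have le: "\<bar>TF_primitive F f x - TF_primitive F f x'\<bar> \<le> M * \<bar>x - x'\<bar>" if "x \<le> x'" for x x'
    using up[OF that] monoD[OF mono_TF_primitive that] that by (simp add: abs_minus_commute)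
  show ?thesis
  proof (cases "x \<le> x'")
    case False
    then show ?thesis using le[of x' x] by (simp add: abs_minus_commute)
  qed (rule le)
qed

end

text \<open>For integrable \<open>f \<ge> 0\<close> the primitive is absolutely continuous: truncating \<open>f\<close> at height \<open>n\<close>
  splits it into an \<open>n\<close>-Lipschitz part and a monotone part of total increase at most
  \<open>\<integral> (f - min f n) \<rightarrow> 0\<close>.\<close>

lemma set_integral_deriv_TF_primitive_Icc:
  assumes f: "set_integrable lebesgue {0..} f" and f_nonneg: "\<And>t. 0 \<le> f t" and "0 \<le> X"
  shows "set_integrable lebesgue {0..X} (deriv (TF_primitive F f))"
    and "(LINT x:{0..X}|lebesgue. deriv (TF_primitive F f) x) = TF_primitive F f X"
proof -
  show "set_integrable lebesgue {0..X} (deriv (TF_primitive F f))"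
    using set_integral_deriv_mono_le(1)[OF mono_TF_primitive[OF f f_nonneg] \<open>0 \<le> X\<close>, of 1] by simp
  define g where "g = (\<lambda>n t. min (f t) (real n))"
  define r where "r = (\<lambda>n t. f t - g n t)"
  have g: "set_integrable lebesgue {0..} (g n)" "0 \<le> g n t" "g n t \<le> real n" for n t
    unfolding g_def using set_integrable_min_const[OF f _ f_nonneg] f_nonneg by auto
  have r: "set_integrable lebesgue {0..} (r n)" "0 \<le> r n t" for n t
    unfolding r_def using f g(1) by (auto intro: set_integral_diff(1) simp: g_def)
  have split: "TF_primitive F f x = TF_primitive F (g n) x + TF_primitive F (r n) x" for n x
    using TF_primitive_add[OF g(1)[of n] r(1)[of n], of x] by (simp add: r_def)
  have "(\<lambda>n. TF_primitive F (r n) (X + 1) - TF_primitive F (r n) 0) \<longlonglongrightarrow> 0"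
  proof (rule tendsto_sandwich[OF _ _ tendsto_const])
    show "\<forall>\<^sub>F n in sequentially. 0 \<le> TF_primitive F (r n) (X + 1) - TF_primitive F (r n) 0"
      using r by (simp add: TF_primitive_eq_0 TF_primitive_nonneg)
    show "\<forall>\<^sub>F n in sequentially. TF_primitive F (r n) (X + 1) - TF_primitive F (r n) 0
        \<le> (LINT t:{0..}|lebesgue. f t - min (f t) (real n))"
      using r by (simp add: TF_primitive_eq_0 TF_primitive_le_integral r_def g_def)
    show "(\<lambda>n. LINT t:{0..}|lebesgue. f t - min (f t) (real n)) \<longlonglongrightarrow> 0"
      using LIMSEQ_set_integral_truncation[OF f _ f_nonneg] by simp
  qed
  then have "(LINT x:{0..X}|lebesgue. deriv (TF_primitive F f) x) = TF_primitive F f X - TF_primitive F f 0"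
    using \<open>0 \<le> X\<close> split mono_TF_primitive[OF g(1,2)] TF_primitive_lipschitz[OF g] mono_TF_primitive[OF r]
    by (intro set_integral_deriv_mono_approx) auto
  then show "(LINT x:{0..X}|lebesgue. deriv (TF_primitive F f) x) = TF_primitive F f X"
    by (simp add: TF_primitive_eq_0)
qed

lemma partial2_AE_convergent:
  "AE t in lebesgue. (\<lambda>n. partial2 F (real n) t) \<longlonglongrightarrow> lim (\<lambda>n. partial2 F (real n) t) \<and>
    \<bar>lim (\<lambda>n. partial2 F (real n) t)\<bar> \<le> 1"
proof -
  have "AE t in lebesgue. \<forall>n. (0 \<le> partial2 F (real n) t \<and> partial2 F (real n) t \<le> 1) \<and>
      partial2 F (real n) t \<le> partial2 F (real (Suc n)) t"
    unfolding AE_all_countable using partial2_AE_bounds[OF F] partial2_AE_mono[OF F]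
    by (auto elim: eventually_elim2)
  then show ?thesis
  proof (rule eventually_mono)
    fix t assume t: "\<forall>n. (0 \<le> partial2 F (real n) t \<and> partial2 F (real n) t \<le> 1) \<and>
      partial2 F (real n) t \<le> partial2 F (real (Suc n)) t"
    then have "(\<lambda>n. partial2 F (real n) t) \<longlonglongrightarrow> (SUP n. partial2 F (real n) t)"
      by (intro LIMSEQ_incseq_SUP incseq_SucI bdd_aboveI[of _ 1]) auto
    then have lim: "(\<lambda>n. partial2 F (real n) t) \<longlonglongrightarrow> lim (\<lambda>n. partial2 F (real n) t)"
      by (simp add: convergent_LIMSEQ_iff[symmetric] convergentI)
    moreover have "\<bar>lim (\<lambda>n. partial2 F (real n) t)\<bar> \<le> 1"
      using t by (intro LIMSEQ_le_const2[OF tendsto_rabs[OF lim]]) auto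
    ultimately show "(\<lambda>n. partial2 F (real n) t) \<longlonglongrightarrow> lim (\<lambda>n. partial2 F (real n) t) \<and>
      \<bar>lim (\<lambda>n. partial2 F (real n) t)\<bar> \<le> 1" by blast
  qed
qed

text \<open>Strictness in the first argument forces \<open>\<partial>\<^sub>2F(x, t) \<rightarrow> 1\<close> as \<open>x \<rightarrow> \<infinity>\<close>: the limit is at most
  \<open>1\<close> and has integral \<open>w\<close> over every \<open>[0, w]\<close>.\<close>

lemma partial2_LIMSEQ_1:
  assumes strict: "\<forall>w\<ge>0. ((\<lambda>t. F t w) \<longlongrightarrow> w) at_top"
  shows "AE t in lebesgue. 0 \<le> t \<longrightarrow> (\<lambda>n. partial2 F (real n) t) \<longlonglongrightarrow> 1"
proof -
  define k where "k t = lim (\<lambda>n. partial2 F (real n) t)" for t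
  have k_meas: "k \<in> borel_measurable lebesgue"
    unfolding k_def[abs_def] by (intro borel_measurable_lim_metric borel_measurable_partial2[OF F])
  note conv = partial2_AE_convergent[folded k_def]
  have "AE t\<in>{0..real w} in lebesgue. k t = 1" for w :: nat
  proof (rule AE_eq_const_if_set_integral_eq)
    have ind: "integrable lebesgue (indicator {0..real w} :: real \<Rightarrow> real)"
      by (simp add: integrable_indicator_iff)
    have "(\<lambda>n. LINT t:{0..real w}|lebesgue. partial2 F (real n) t) \<longlonglongrightarrow> (LINT t:{0..real w}|lebesgue. k t)"
      unfolding set_lebesgue_integral_def
    proof (rule integral_dominated_convergence[where w = "indicator {0..real w}"])
      show "(\<lambda>t. indicator {0..real w} t *\<^sub>R k t) \<in> borel_measurable lebesgue"
        using k_meas by (intro borel_measurable_scaleR borel_measurable_indicator) auto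
      show "(\<lambda>t. indicator {0..real w} t *\<^sub>R partial2 F (real n) t) \<in> borel_measurable lebesgue" for n
        using borel_measurable_partial2[OF F] by (intro borel_measurable_scaleR borel_measurable_indicator) auto
      show "AE t in lebesgue. (\<lambda>n. indicator {0..real w} t *\<^sub>R partial2 F (real n) t)
          \<longlonglongrightarrow> indicator {0..real w} t *\<^sub>R k t"
        using conv by (rule eventually_mono) (auto intro: tendsto_mult_left)
      show "AE t in lebesgue. norm (indicator {0..real w} t *\<^sub>R partial2 F (real n) t) \<le> indicator {0..real w} t" for n
        using partial2_AE_bounds[OF F, of "real n"] by (rule eventually_mono) (auto simp: indicator_def)
    qed (rule ind)
    moreover have "(LINT t:{0..real w}|lebesgue. partial2 F (real n) t) = F (real n) (real w)" for n
      using set_integral_partial2_Icc(2)[OF F, of "real w" "real n"] by (simp add: quadrant_ext_def)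
    moreover have "(\<lambda>n. F (real n) (real w)) \<longlonglongrightarrow> real w"
      using filterlim_compose[OF strict[rule_format] filterlim_real_sequentially] by simp
    ultimately show "(LINT t:{0..real w}|lebesgue. k t) = 1 * measure lebesgue {0..real w}"
      using LIMSEQ_unique by auto
    show "set_integrable lebesgue {0..real w} k"
    proof (rule set_integrable_bound[of lebesgue "{0..real w}" "\<lambda>_. 1::real"])
      show "set_integrable lebesgue {0..real w} (\<lambda>_. 1::real)"
        using ind by (simp add: set_integrable_def)
      show "set_borel_measurable lebesgue {0..real w} k"
        using k_meas unfolding set_borel_measurable_def
        by (intro borel_measurable_scaleR borel_measurable_indicator) auto
      show "AE t in lebesgue. t \<in> {0..real w} \<longrightarrow> norm (k t) \<le> norm (1::real)"
        using conv by (rule eventually_mono) simp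
    qed
    show "AE t\<in>{0..real w} in lebesgue. k t \<le> 1"
      using conv by (rule eventually_mono) (simp add: abs_le_iff)
  qed auto
  then have "AE t in lebesgue. \<forall>w::nat. t \<in> {0..real w} \<longrightarrow> k t = 1"
    unfolding AE_all_countable by blast
  then show ?thesis using conv
  proof eventually_elim
    case (elim t)
    obtain w :: nat where "t \<le> real w" using real_arch_simple by blast
    then show ?case using elim by auto
  qed
qed

lemma TF_primitive_LIMSEQ:
  assumes strict: "\<forall>w\<ge>0. ((\<lambda>t. F t w) \<longlongrightarrow> w) at_top" and f: "set_integrable lebesgue {0..} f"
  shows "(\<lambda>n. TF_primitive F f (real n)) \<longlonglongrightarrow> (LINT t:{0..}|lebesgue. f t)"
  unfolding TF_primitive_def set_lebesgue_integral_def
proof (rule integral_dominated_convergence[where w = "\<lambda>t. indicator {0..} t *\<^sub>R \<bar>f t\<bar>"])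
  show "(\<lambda>t. indicator {0..} t *\<^sub>R f t) \<in> borel_measurable lebesgue"
    using f unfolding set_integrable_def by (rule borel_measurable_integrable)
  show "(\<lambda>t. indicator {0..} t *\<^sub>R (partial2 F (real n) t * f t)) \<in> borel_measurable lebesgue" for n
    using set_integrable_partial2_mult[OF f] unfolding set_integrable_def by (rule borel_measurable_integrable)
  show "integrable lebesgue (\<lambda>t. indicator {0..} t *\<^sub>R \<bar>f t\<bar>)"
    using set_integrable_abs[OF f] unfolding set_integrable_def .
  show "AE t in lebesgue. (\<lambda>n. indicator {0..} t *\<^sub>R (partial2 F (real n) t * f t)) \<longlonglongrightarrow> indicator {0..} t *\<^sub>R f t"
    using partial2_LIMSEQ_1[OF strict]
  proof (rule eventually_mono)
    fix t :: real assume "0 \<le> t \<longrightarrow> (\<lambda>n. partial2 F (real n) t) \<longlonglongrightarrow> 1"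
    then show "(\<lambda>n. indicator {0..} t *\<^sub>R (partial2 F (real n) t * f t)) \<longlonglongrightarrow> indicator {0..} t *\<^sub>R f t"
      using tendsto_mult_right[of "\<lambda>n. partial2 F (real n) t" 1 sequentially "f t"] by (simp add: indicator_def)
  qed
  show "AE t in lebesgue. norm (indicator {0..} t *\<^sub>R (partial2 F (real n) t * f t)) \<le> indicator {0..} t *\<^sub>R \<bar>f t\<bar>" for n
    using partial2_AE_bounds[OF F, of "real n"]
    by (rule eventually_mono) (auto simp: indicator_def abs_mult intro: mult_left_le_one_le)
qed

lemma set_integral_deriv_TF_primitive_nonneg:
  assumes strict: "\<forall>w\<ge>0. ((\<lambda>t. F t w) \<longlongrightarrow> w) at_top"
    and f: "set_integrable lebesgue {0..} f" and f_nonneg: "\<And>t. 0 \<le> f t"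
  shows "set_integrable lebesgue {0..} (deriv (TF_primitive F f))"
    and "(LINT x:{0..}|lebesgue. deriv (TF_primitive F f) x) = (LINT t:{0..}|lebesgue. f t)"
proof -
  note mono = mono_TF_primitive[OF f f_nonneg]
  have "AE x in lebesgue. 0 \<le> x \<longrightarrow> 0 \<le> deriv (TF_primitive F f) x"
    using mono_AE_differentiable[OF mono] by (rule eventually_mono) (simp add: deriv_nonneg_mono[OF mono])
  moreover have "(\<lambda>n. LINT x:{0..real n}|lebesgue. deriv (TF_primitive F f) x) \<longlonglongrightarrow> (LINT t:{0..}|lebesgue. f t)"
    using TF_primitive_LIMSEQ[OF strict f] by (simp add: set_integral_deriv_TF_primitive_Icc(2)[OF f f_nonneg])
  ultimately show "set_integrable lebesgue {0..} (deriv (TF_primitive F f))"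
    "(LINT x:{0..}|lebesgue. deriv (TF_primitive F f) x) = (LINT t:{0..}|lebesgue. f t)"
    using set_integral_Ici_LIMSEQ_nonneg[OF borel_measurable_deriv_mono[OF mono]]
      set_integral_deriv_TF_primitive_Icc(1)[OF f f_nonneg] by auto
qed

lemma set_integral_TF:
  assumes strict: "\<forall>w\<ge>0. ((\<lambda>t. F t w) \<longlongrightarrow> w) at_top" and f: "set_integrable lebesgue {0..} f"
  shows "set_integrable lebesgue {0..} (TF F f)" and "(LINT x:{0..}|lebesgue. TF F f x) = (LINT x:{0..}|lebesgue. f x)"
proof -
  define f\<^sub>p where "f\<^sub>p t = (\<bar>f t\<bar> + f t) / 2" for t
  define f\<^sub>m where "f\<^sub>m t = (\<bar>f t\<bar> - f t) / 2" for t
  have int: "set_integrable lebesgue {0..} f\<^sub>p" "set_integrable lebesgue {0..} f\<^sub>m"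
    unfolding f\<^sub>p_def f\<^sub>m_def using set_integrable_abs[OF f] f
    by (auto intro: set_integrable_divide set_integral_add(1) set_integral_diff(1))
  have nonneg: "0 \<le> f\<^sub>p t" "0 \<le> f\<^sub>m t" for t unfolding f\<^sub>p_def f\<^sub>m_def by auto
  have f_eq: "f = (\<lambda>t. f\<^sub>p t - f\<^sub>m t)" unfolding f\<^sub>p_def f\<^sub>m_def by (auto simp: field_simps)
  define D where "D x = deriv (TF_primitive F f\<^sub>p) x - deriv (TF_primitive F f\<^sub>m) x" for x
  note mono = mono_TF_primitive[OF int(1) nonneg(1)] mono_TF_primitive[OF int(2) nonneg(2)]
  have P: "TF_primitive F f = (\<lambda>y. TF_primitive F f\<^sub>p y - TF_primitive F f\<^sub>m y)"
    by (subst f_eq) (simp add: fun_eq_iff TF_primitive_diff[OF int])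
  have f_meas: "set_borel_measurable lebesgue {0..} f"
    using f unfolding set_integrable_def set_borel_measurable_def by (rule borel_measurable_integrable)
  have ae: "AE x in lebesgue. indicator {0..} x *\<^sub>R TF F f x = indicator {0..} x *\<^sub>R D x"
    using TF_AE_eq_deriv_TF_primitive[OF f_meas] mono_AE_differentiable[OF mono(1)] mono_AE_differentiable[OF mono(2)]
  proof eventually_elim
    case (elim x)
    have "DERIV (\<lambda>y. TF_primitive F f\<^sub>p y - TF_primitive F f\<^sub>m y) x :> D x"
      unfolding D_def using elim(2,3) by (intro DERIV_diff) (auto simp: DERIV_deriv_iff_real_differentiable)
    then show ?case using elim(1) by (simp add: P DERIV_imp_deriv indicator_def)
  qed
  have D_int: "set_integrable lebesgue {0..} D"
    unfolding D_def[abs_def] using set_integral_deriv_TF_primitive_nonneg(1)[OF strict int(1) nonneg(1)]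
      set_integral_deriv_TF_primitive_nonneg(1)[OF strict int(2) nonneg(2)]
    by (rule set_integral_diff(1))
  have D_meas: "(\<lambda>x. indicator {0..} x *\<^sub>R D x) \<in> borel_measurable lebesgue"
    using D_int unfolding set_integrable_def by (rule borel_measurable_integrable)
  have TF_meas: "(\<lambda>x. indicator {0..} x *\<^sub>R TF F f x) \<in> borel_measurable lebesgue"
    using D_meas ae by (rule borel_measurable_AE[OF _ AE_symmetric])
  show "set_integrable lebesgue {0..} (TF F f)"
    using D_int integrable_cong_AE[OF TF_meas D_meas ae] unfolding set_integrable_def by simp
  have "(LINT x:{0..}|lebesgue. TF F f x) = (LINT x:{0..}|lebesgue. D x)"
    unfolding set_lebesgue_integral_def using TF_meas D_meas ae by (rule integral_cong_AE)
  also have "\<dots> = (LINT x:{0..}|lebesgue. f\<^sub>p x) - (LINT x:{0..}|lebesgue. f\<^sub>m x)"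
    unfolding D_def using set_integral_deriv_TF_primitive_nonneg[OF strict int(1) nonneg(1)]
      set_integral_deriv_TF_primitive_nonneg[OF strict int(2) nonneg(2)]
    by (simp add: set_integral_diff)
  also have "\<dots> = (LINT x:{0..}|lebesgue. f\<^sub>p x - f\<^sub>m x)"
    using set_integral_diff(2)[OF int] by simp
  also have "\<dots> = (LINT x:{0..}|lebesgue. f x)"
    by (simp flip: f_eq)
  finally show "(LINT x:{0..}|lebesgue. TF F f x) = (LINT x:{0..}|lebesgue. f x)" .
qed

lemma TF_indicator_AE_eq_1_iff:
  "(AE x in lebesgue. 0 \<le> x \<longrightarrow> TF F (indicator {0..}) x = 1) \<longleftrightarrow> (\<forall>w\<ge>0. margin F w = w)"
proof -
  have ind: "set_borel_measurable lebesgue {0..} (indicator {0..} :: real \<Rightarrow> real)"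
    unfolding set_borel_measurable_def by (intro borel_measurable_scaleR borel_measurable_indicator) auto
  have TF_eq: "TF F (indicator {0..}) x = deriv (margin F) x" if "0 < x" for x
    using TF_eq_deriv_TF_primitive[OF ind that] by (simp add: TF_primitive_indicator)
  have AE_pos: "AE x in lebesgue. 0 \<le> x \<longrightarrow> 0 < (x::real)"
    using AE_lebesgue_real_neq[of 0] by (rule eventually_mono) auto
  show ?thesis
  proof
    assume "AE x in lebesgue. 0 \<le> x \<longrightarrow> TF F (indicator {0..}) x = 1"
    then have deriv_1: "AE x in lebesgue. 0 \<le> x \<longrightarrow> deriv (margin F) x = 1"
      using AE_pos by eventually_elim (auto simp: TF_eq)
    show "\<forall>w\<ge>0. margin F w = w"
    proof (intro allI impI)
      fix w :: real assume "0 \<le> w"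
      have "margin F w = margin F w - margin F 0" by (simp add: margin_eq_0[OF F])
      also have "\<dots> = (LINT x:{0..w}|lebesgue. deriv (margin F) x)"
        using set_integral_deriv_mono_lipschitz(2)[OF mono_margin[OF F] _ \<open>0 \<le> w\<close>, of 1]
          margin_lipschitz[OF F] by simp
      also have "\<dots> = (LINT x:{0..w}|lebesgue. 1)"
        using deriv_1 borel_measurable_deriv_mono[OF mono_margin[OF F]]
        by (intro set_lebesgue_integral_cong_AE) (auto elim!: eventually_mono)
      also have "\<dots> = w" using \<open>0 \<le> w\<close> by (simp add: set_integral_const)
      finally show "margin F w = w" .
    qed
  next
    assume id: "\<forall>w\<ge>0. margin F w = w"
    have "TF F (indicator {0..}) x = 1" if "0 < x" for x
    proof -
      have "\<forall>\<^sub>F y in nhds x. margin F y = y"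
        using eventually_nhds_in_open[of "{0<..}" x] that id by (auto elim!: eventually_mono)
      then have "deriv (margin F) x = deriv (\<lambda>y. y) x" by (rule deriv_cong_ev) simp
      then show ?thesis using TF_eq[OF that] by simp
    qed
    then show "AE x in lebesgue. 0 \<le> x \<longrightarrow> TF F (indicator {0..}) x = 1"
      using AE_pos by (auto elim!: eventually_mono)
  qed
qed

end

lemma strict_subdist_transpose: "strict_subdist (\<lambda>x y. F y x) \<longleftrightarrow> strict_subdist F"
  unfolding strict_subdist_def by auto

lemma markov_op_TF:
  assumes F: "subdistribution F" and strict: "strict_subdist F"
  shows "markov_op (TF F)"
proof -
  have "\<forall>w\<ge>0. ((\<lambda>t. F w t) \<longlongrightarrow> w) at_top" "\<forall>w\<ge>0. ((\<lambda>t. F t w) \<longlongrightarrow> w) at_top"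
    using strict unfolding strict_subdist_def by auto
  then show ?thesis
    unfolding markov_op_def
    using TF_indicator_AE_eq_1_iff[OF F] margin_eq_id_iff[OF F] set_integral_TF[OF F] by blast
qed

lemma margin_tendsto_if_markov_op_TF:
  assumes F: "subdistribution F" and "markov_op (TF F)"
  shows "\<forall>w\<ge>0. ((\<lambda>t. F w t) \<longlongrightarrow> w) at_top"
  using assms(2) TF_indicator_AE_eq_1_iff[OF F] margin_eq_id_iff[OF F] unfolding markov_op_def by blast

theorem mainTheorem19:
  fixes F :: "real \<Rightarrow> real \<Rightarrow> real"
  assumes "subdistribution F"
  shows "strict_subdist F \<longleftrightarrow> markov_op (TF F) \<and> markov_op (TF (\<lambda>x y. F y x))"
proof
  assume "strict_subdist F"
  then show "markov_op (TF F) \<and> markov_op (TF (\<lambda>x y. F y x))"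
    using markov_op_TF assms subdistribution_transpose[OF assms] strict_subdist_transpose by auto
next
  assume "markov_op (TF F) \<and> markov_op (TF (\<lambda>x y. F y x))"
  then show "strict_subdist F"
    using margin_tendsto_if_markov_op_TF[OF assms] margin_tendsto_if_markov_op_TF[OF subdistribution_transpose[OF assms]]
    unfolding strict_subdist_def by auto
qed

end
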